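(* Assume $\langle f\rangle_X=0$ and that $\psi$ satisfies (A1) and (A2), and let $e_{\rm mod}$ be the modeling error. Then: (a) there exists a constant $C_{10}$ such that $\|e_{\rm mod}\|_{L^2}\le\frac1{2\sqrt3}|e_{\rm mod}|_{H^1}\le C_{10}H|f|_{H^{-1}}$; (b) if additionally there are constants $C_{\rm coll},C''_{\psi^0}$ with $\bigl|X_{i_k^{\rm coll}}-\frac{X_{i_k}+X_{i_{k+1}-1}}2\bigr|\le\epsilon C_{\rm coll}$ for all $k$ and $\|D^2\psi^0\|_{L^\infty}\le C''_{\psi^0}$, then there exist constants $C_{11},C_{12}$ such that $\|e_{\rm mod}\|_{L^2}\le\frac1{2\sqrt3}|e_{\rm mod}|_{H^1}\le(C_{11}H^2+C_{12}\epsilon)|f|_{H^{-1}}$; (c) if $\psi(X_i,Y_j)$ does not depend on $X_i$, then $e_{\rm mod}=0$. Here the constants depend only on $c_\psi,C_\psi,C'_\psi,C_{\rm coll},C''_{\psi^0}$ and $p$, and are independent of $\epsilon$, $H$ and $f$.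
   Context: Let $\epsilon>0$, $N,p$ positive integers with normalization $N\epsilon=1$; $X_i=\epsilon i$, $Y_j=j$. $U^N_{\rm per}(\epsilon\mathbb Z)$: functions $u:\epsilon\mathbb Z\to\mathbb R$ with $u(X_{i+N})=u(X_i)$; $U^N_\#(\epsilon\mathbb Z)$: those with $\langle u\rangle_X:=\frac1N\sum_{i=1}^Nu(X_i)=0$. $\langle u,v\rangle_X=\frac1N\sum_{i=1}^Nu(X_i)v(X_i)$, $Du(X_i)=(u(X_{i+1})-u(X_i))/\epsilon$, $\|u\|_{L^2}=\langle u,u\rangle_X^{1/2}$, $\|u\|_{L^\infty}=\max_{1\le i\le N}|u(X_i)|$, $|u|_{H^1}=\|Du\|_{L^2}$, $|u|_{H^{-1}}=\sup\{\langle u,w\rangle_X/|w|_{H^1}:0\ne w\in U^N_\#(\epsilon\mathbb Z)\}$. $U^p_\#(\epsilon\mathbb Z)$: $p$-periodic functions on $\epsilon\mathbb Z$ with $\sum_{i=1}^p w(X_i)=0$. Two-scale functions $g:\epsilon\mathbb Z\times\mathbb Z\to\mathbb R$ satisfy $g(X_{i+N},Y_j)=g(X_i,Y_j)=g(X_i,Y_{j+p})$; $D_Xg(X_i,Y_j)=(g(X_{i+1},Y_j)-g(X_i,Y_j))/\epsilon$, $\langle g\rangle_Y(X_i)=\frac1p\sum_{j=1}^pg(X_i,Y_j)$, $\|g\|_{L^\infty(N,p)}=\max_{1\le i\le N,1\le j\le p}|g|$. $\psi$ is a two-scale function with (A1) $0<c_\psi\le\psi\le C_\psi$ and (A2) $\|D_X\psi\|_{L^\infty(N,p)}\le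 C'_\psi$. $\psi^0(X_i)=\langle1/\psi(X_i,\cdot)\rangle_Y^{-1}$. $f\in U^N_{\rm per}(\epsilon\mathbb Z)$. HQC method: fix indices $1=i_1<\dots<i_K\le N$, $i_{K+1}=N+1$, elements $S_k=\{X_i:i_k\le i<i_{k+1}\}$, $H_k=\epsilon(i_{k+1}-i_k)$, $H=\max_kH_k$. $U^H_{\rm per}$: $v\in U^N_{\rm per}(\epsilon\mathbb Z)$ affine on each $\{X_i:i_k\le i\le i_{k+1}\}$; $U^H_\#=U^H_{\rm per}\cap U^N_\#(\epsilon\mathbb Z)$. In each $S_k$ choose a sampling domain $S_k^{\rm rep}=\{X_i:i_k^{\rm rep}\le i<i_k^{\rm rep}+p\}\subset S_k$ and a collocation index with $X_{i_k^{\rm coll}}\in S_k^{\rm rep}$; $\psi^\epsilon_{{\rm coll},k}(X_i)=\psi(X_{i_k^{\rm coll}},X_i/\epsilon)$, $\langle a,b\rangle_{S_k^{\rm rep}}=\frac1p\sum_{X_i\in S_k^{\rm rep}}a(X_i)b(X_i)$. For $v^H\in U^H_{\rm per}$ let $\ell_k$ be the affine function on $\epsilon\mathbb Z$ equal to $v^H$ on $S_k$; $\mathcal R_k(v^H)=\ell_k+w$ with $w\in U^p_\#(\epsilon\mathbb Z)$ such that $\langle\psi^\epsilon_{{\rm coll},k}D(\ell_k+w),Ds\rangle_{S_k^{\rm rep}}=0$ for all $s\in U^p_\#(\epsilon\mathbb Z)$. HQC problem: $u^H\in U^H_\#$ with $\sum_{k=1}^KH_k\langle\psi^\epsilon_{{\rm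 coll},k}D\mathcal R_k(u^H),D\mathcal R_k(v^H)\rangle_{S_k^{\rm rep}}=\langle f,v^H\rangle_X$ for all $v^H\in U^H_\#$. Modeling error: $e_{\rm mod}=u^H-\tilde u^H$, where $\tilde u^H\in U^H_\#$ solves $\langle\psi^0D\tilde u^H,Dv^H\rangle_X=\langle f,v^H\rangle_X$ for all $v^H\in U^H_\#$. *)

theory Defs
  imports Complex_Main
begin

text \<open>Grid functions on eps*Z are represented by their values at the
 grid indices: u :: int => real with u i = u(X_i), X_i = eps*i, eps = 1/N.
 Two-scale functions g :: int => int => real with g i j = g(X_i, Y_j).\<close>

definition eps :: "nat \<Rightarrow> real" where
  "eps N = 1 / real N"

definition per :: "nat \<Rightarrow> (int \<Rightarrow> real) \<Rightarrow> bool" where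
  "per N u \<longleftrightarrow> (\<forall>i. u (i + int N) = u i)"

definition avgX :: "nat \<Rightarrow> (int \<Rightarrow> real) \<Rightarrow> real" where
  "avgX N u = (1 / real N) * (\<Sum>i\<in>{1..int N}. u i)"

definition ipX :: "nat \<Rightarrow> (int \<Rightarrow> real) \<Rightarrow> (int \<Rightarrow> real) \<Rightarrow> real" where
  "ipX N u v = (1 / real N) * (\<Sum>i\<in>{1..int N}. u i * v i)"

definition Dd :: "nat \<Rightarrow> (int \<Rightarrow> real) \<Rightarrow> int \<Rightarrow> real" where
  "Dd N u = (\<lambda>i. (u (i + 1) - u i) / eps N)"

definition L2 :: "nat \<Rightarrow> (int \<Rightarrow> real) \<Rightarrow> real" where
  "L2 N u = sqrt (ipX N u u)"

definition Linf :: "nat \<Rightarrow> (int \<Rightarrow> real) \<Rightarrow> real" where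
  "Linf N u = Max ((\<lambda>i. \<bar>u i\<bar>) ` {1..int N})"

definition H1 :: "nat \<Rightarrow> (int \<Rightarrow> real) \<Rightarrow> real" where
  "H1 N u = L2 N (Dd N u)"

definition Uzero :: "nat \<Rightarrow> (int \<Rightarrow> real) set" where
  "Uzero N = {u. per N u \<and> avgX N u = 0}"

text \<open>H^{-1} seminorm. The value 0 is inserted so that the supremum is
 well defined also when U^N_# = {0} (N = 1); for N >= 2 the set is symmetric
 under w -> -w, so this does not change the supremum.\<close>
definition Hm1 :: "nat \<Rightarrow> (int \<Rightarrow> real) \<Rightarrow> real" where
  "Hm1 N u = Sup (insert 0 {ipX N u w / H1 N w | w. w \<in> Uzero N \<and> w \<noteq> (\<lambda>_. 0)})"

definition twoscale :: "nat \<Rightarrow> nat \<Rightarrow> (int \<Rightarrow> int \<Rightarrow> real) \<Rightarrow> bool" where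
  "twoscale N p g \<longleftrightarrow> (\<forall>i j. g (i + int N) j = g i j \<and> g i (j + int p) = g i j)"

definition DX :: "nat \<Rightarrow> (int \<Rightarrow> int \<Rightarrow> real) \<Rightarrow> int \<Rightarrow> int \<Rightarrow> real" where
  "DX N g = (\<lambda>i j. (g (i + 1) j - g i j) / eps N)"

definition avgY :: "nat \<Rightarrow> (int \<Rightarrow> int \<Rightarrow> real) \<Rightarrow> int \<Rightarrow> real" where
  "avgY p g i = (1 / real p) * (\<Sum>j\<in>{1..int p}. g i j)"

definition psi0 :: "nat \<Rightarrow> (int \<Rightarrow> int \<Rightarrow> real) \<Rightarrow> int \<Rightarrow> real" where
  "psi0 p psi = (\<lambda>i. 1 / avgY p (\<lambda>i j. 1 / psi i j) i)"

definition A1 :: "nat \<Rightarrow> nat \<Rightarrow> (int \<Rightarrow> int \<Rightarrow> real) \<Rightarrow> real \<Rightarrow> real \<Rightarrow> bool" where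
  "A1 N p psi c C \<longleftrightarrow> 0 < c \<and> (\<forall>i\<in>{1..int N}. \<forall>j\<in>{1..int p}. c \<le> psi i j \<and> psi i j \<le> C)"

definition A2 :: "nat \<Rightarrow> nat \<Rightarrow> (int \<Rightarrow> int \<Rightarrow> real) \<Rightarrow> real \<Rightarrow> bool" where
  "A2 N p psi C' \<longleftrightarrow> (\<forall>i\<in>{1..int N}. \<forall>j\<in>{1..int p}. \<bar>DX N psi i j\<bar> \<le> C')"

definition mesh :: "nat \<Rightarrow> nat \<Rightarrow> (nat \<Rightarrow> int) \<Rightarrow> bool" where
  "mesh N K idx \<longleftrightarrow> 1 \<le> K \<and> idx 1 = 1 \<and> (\<forall>k\<in>{1..<K}. idx k < idx (Suc k))
     \<and> idx K \<le> int N \<and> idx (Suc K) = int N + 1"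

definition Hk :: "nat \<Rightarrow> (nat \<Rightarrow> int) \<Rightarrow> nat \<Rightarrow> real" where
  "Hk N idx k = eps N * real_of_int (idx (Suc k) - idx k)"

definition Hmax :: "nat \<Rightarrow> nat \<Rightarrow> (nat \<Rightarrow> int) \<Rightarrow> real" where
  "Hmax N K idx = Max (Hk N idx ` {1..K})"

definition affine_on :: "(int \<Rightarrow> real) \<Rightarrow> int set \<Rightarrow> bool" where
  "affine_on v A \<longleftrightarrow> (\<exists>a b. \<forall>i\<in>A. v i = a + b * real_of_int i)"

definition UHper :: "nat \<Rightarrow> nat \<Rightarrow> (nat \<Rightarrow> int) \<Rightarrow> (int \<Rightarrow> real) set" where
  "UHper N K idx = {v. per N v \<and> (\<forall>k\<in>{1..K}. affine_on v {idx k..idx (Suc k)})}"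

definition UHzero :: "nat \<Rightarrow> nat \<Rightarrow> (nat \<Rightarrow> int) \<Rightarrow> (int \<Rightarrow> real) set" where
  "UHzero N K idx = UHper N K idx \<inter> Uzero N"

definition Upzero :: "nat \<Rightarrow> (int \<Rightarrow> real) set" where
  "Upzero p = {w. per p w \<and> (\<Sum>i\<in>{1..int p}. w i) = 0}"

text \<open>Sampling domains S_k^rep = {rep k ..< rep k + p} within S_k and collocation
 indices coll k in S_k^rep.\<close>
definition sampling :: "nat \<Rightarrow> nat \<Rightarrow> (nat \<Rightarrow> int) \<Rightarrow> (nat \<Rightarrow> int) \<Rightarrow> (nat \<Rightarrow> int) \<Rightarrow> bool" where
  "sampling p K idx rep coll \<longleftrightarrow> (\<forall>k\<in>{1..K}. idx k \<le> rep k \<and> rep k + int p \<le> idx (Suc k)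
      \<and> rep k \<le> coll k \<and> coll k < rep k + int p)"

definition ipRep :: "nat \<Rightarrow> int \<Rightarrow> (int \<Rightarrow> real) \<Rightarrow> (int \<Rightarrow> real) \<Rightarrow> real" where
  "ipRep p r a b = (1 / real p) * (\<Sum>i\<in>{r..<r + int p}. a i * b i)"

text \<open>psi^eps_{coll,k}(X_i) = psi(X_{coll k}, X_i/eps) = psi(X_{coll k}, Y_i).\<close>
definition psicoll :: "(int \<Rightarrow> int \<Rightarrow> real) \<Rightarrow> int \<Rightarrow> int \<Rightarrow> real" where
  "psicoll psi c = (\<lambda>i. psi c i)"

text \<open>r is the reconstruction R_k(v): r = l + w with l affine on all of eps*Z,
 agreeing with v on the element, and w in U^p_# solving the cell problem.\<close>
definition cell_ok :: "nat \<Rightarrow> nat \<Rightarrow> (int \<Rightarrow> int \<Rightarrow> real) \<Rightarrow> (nat \<Rightarrow> int) \<Rightarrow> (nat \<Rightarrow> int)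
    \<Rightarrow> (nat \<Rightarrow> int) \<Rightarrow> nat \<Rightarrow> (int \<Rightarrow> real) \<Rightarrow> (int \<Rightarrow> real) \<Rightarrow> bool" where
  "cell_ok N p psi idx rep coll k v r \<longleftrightarrow>
     (\<exists>l w. affine_on l UNIV \<and> (\<forall>i\<in>{idx k..idx (Suc k)}. l i = v i) \<and> w \<in> Upzero p
        \<and> r = (\<lambda>i. l i + w i)
        \<and> (\<forall>s\<in>Upzero p. ipRep p (rep k) (\<lambda>i. psicoll psi (coll k) i * Dd N r i) (Dd N s) = 0))"

definition Rk :: "nat \<Rightarrow> nat \<Rightarrow> (int \<Rightarrow> int \<Rightarrow> real) \<Rightarrow> (nat \<Rightarrow> int) \<Rightarrow> (nat \<Rightarrow> int)
    \<Rightarrow> (nat \<Rightarrow> int) \<Rightarrow> nat \<Rightarrow> (int \<Rightarrow> real) \<Rightarrow> (int \<Rightarrow> real)" where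
  "Rk N p psi idx rep coll k v = (THE r. cell_ok N p psi idx rep coll k v r)"

definition HQC_sol :: "nat \<Rightarrow> nat \<Rightarrow> (int \<Rightarrow> int \<Rightarrow> real) \<Rightarrow> (int \<Rightarrow> real) \<Rightarrow> nat \<Rightarrow> (nat \<Rightarrow> int)
    \<Rightarrow> (nat \<Rightarrow> int) \<Rightarrow> (nat \<Rightarrow> int) \<Rightarrow> (int \<Rightarrow> real) \<Rightarrow> bool" where
  "HQC_sol N p psi f K idx rep coll u \<longleftrightarrow> u \<in> UHzero N K idx \<and>
     (\<forall>v\<in>UHzero N K idx.
        (\<Sum>k=1..K. Hk N idx k * ipRep p (rep k)
            (\<lambda>i. psicoll psi (coll k) i * Dd N (Rk N p psi idx rep coll k u) i)
            (Dd N (Rk N p psi idx rep coll k v))) = ipX N f v)"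

definition hom_sol :: "nat \<Rightarrow> nat \<Rightarrow> (int \<Rightarrow> int \<Rightarrow> real) \<Rightarrow> (int \<Rightarrow> real) \<Rightarrow> nat \<Rightarrow> (nat \<Rightarrow> int)
    \<Rightarrow> (int \<Rightarrow> real) \<Rightarrow> bool" where
  "hom_sol N p psi f K idx u \<longleftrightarrow> u \<in> UHzero N K idx \<and>
     (\<forall>v\<in>UHzero N K idx. ipX N (\<lambda>i. psi0 p psi i * Dd N u i) (Dd N v) = ipX N f v)"

definition standing :: "nat \<Rightarrow> nat \<Rightarrow> (int \<Rightarrow> int \<Rightarrow> real) \<Rightarrow> real \<Rightarrow> real \<Rightarrow> real
    \<Rightarrow> (int \<Rightarrow> real) \<Rightarrow> nat \<Rightarrow> (nat \<Rightarrow> int) \<Rightarrow> (nat \<Rightarrow> int) \<Rightarrow> (nat \<Rightarrow> int) \<Rightarrow> bool" where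
  "standing N p psi c C C' f K idx rep coll \<longleftrightarrow>
     1 \<le> N \<and> 1 \<le> p \<and> twoscale N p psi \<and> A1 N p psi c C \<and> A2 N p psi C'
     \<and> per N f \<and> avgX N f = 0 \<and> mesh N K idx \<and> sampling p K idx rep coll"

end

theory Submission
  imports Defs "HOL-Analysis.Convex"
begin

text \<open>The Poincare estimate is the discrete one for mean-zero periodic grid functions: each value
  is written through an explicit kernel in the increments, and Cauchy--Schwarz is applied. For the
  error bounds the cell problems are solved explicitly: the reconstructed flux on each sampling
  domain is constant, so the HQC bilinear form is diagonal in the element slopes with coefficient
  \<open>H\<^sub>k \<psi>\<^sup>0(x\<^sub>k)\<close>, while the homogenized form has coefficient \<open>\<integral>\<^sub>S\<^sub>k \<psi>\<^sup>0\<close>. A Strang-type argument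
  bounds the \<open>H\<^sup>1\<close> modeling error by the error of this one-point quadrature rule divided by \<open>c\<^sup>2\<close>.
  That error is of order \<open>H\<close> since \<open>\<psi>\<^sup>0\<close> is Lipschitz, of order \<open>H\<^sup>2 + \<epsilon>\<close> when \<open>x\<^sub>k\<close> is near the
  element midpoint and \<open>D\<^sup>2\<psi>\<^sup>0\<close> is bounded, and zero when \<open>\<psi>\<^sup>0\<close> is constant.\<close>

section \<open>Periodic grid functions\<close>

lemma eps_pos: "1 \<le> N \<Longrightarrow> 0 < eps N"
  by (simp add: eps_def)

lemma per_add_mult:
  assumes "per n g"
  shows "g (i + int n * t) = g i"
proof (induction t rule: int_induct[where k = 0])
  case (step1 t)
  have "g (i + int n * (t + 1)) = g ((i + int n * t) + int n)" by (simp add: algebra_simps)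
  with step1 assms show ?case by (simp add: per_def)
next
  case (step2 t)
  have "g (i + int n * t) = g ((i + int n * (t - 1)) + int n)" by (simp add: algebra_simps)
  with step2 assms show ?case by (simp add: per_def)
qed simp

lemma per_mod_window:
  assumes "per n g" "1 \<le> n"
  shows "g i = g (r + (i - r) mod int n)" and "r + (i - r) mod int n \<in> {r..<r + int n}"
proof -
  have "i = (r + (i - r) mod int n) + int n * ((i - r) div int n)"
    using mult_div_mod_eq[of "int n" "i - r"] by linarith
  then show "g i = g (r + (i - r) mod int n)" using per_add_mult[OF assms(1)] by metis
  show "r + (i - r) mod int n \<in> {r..<r + int n}" using assms(2) by simp
qed

lemma per_all_from_window:
  assumes "per n g" "1 \<le> n" "\<forall>i\<in>{r..<r + int n}. P (g i)"
  shows "P (g i)"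
  using per_mod_window[OF assms(1,2), where i = i and r = r] assms(3) by metis

lemma per_all_from_period:
  assumes "per n g" "1 \<le> n" "\<forall>i\<in>{1..int n}. P (g i)"
  shows "P (g i)"
  by (rule per_all_from_window[OF assms(1,2), of 1]) (use assms(3) in auto)

lemma sum_int_window: "(\<Sum>i\<in>{r..<r + int p}. F i) = (\<Sum>m<p. F (r + int m))"
proof -
  have "{r..<r + int p} = (\<lambda>m. r + int m) ` {..<p}"
  proof
    show "{r..<r + int p} \<subseteq> (\<lambda>m. r + int m) ` {..<p}"
    proof
      fix x assume "x \<in> {r..<r + int p}"
      then have "x = r + int (nat (x - r))" "nat (x - r) < p" by auto
      then show "x \<in> (\<lambda>m. r + int m) ` {..<p}" by blast
    qed
  qed auto
  moreover have "inj_on (\<lambda>m. r + int m) {..<p}" by (auto simp: inj_on_def)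
  ultimately show ?thesis by (simp add: sum.reindex)
qed

lemma sum_window_telescope:
  "(\<Sum>i\<in>{r..<r + int p}. (s::int \<Rightarrow> real) (i + 1) - s i) = s (r + int p) - s r"
  using sum_lessThan_telescope[of "\<lambda>m. s (r + int m)" p]
  by (simp add: sum_int_window algebra_simps)

lemma per_sum_window:
  fixes g :: "int \<Rightarrow> real"
  assumes "per p g"
  shows "(\<Sum>i\<in>{r..<r + int p}. g i) = (\<Sum>i\<in>{1..int p}. g i)"
proof -
  define S where "S r = (\<Sum>i\<in>{r..<r + int p}. g i)" for r
  have shift: "S (r + 1) = S r" for r
  proof -
    have "g r + S (r + 1) = (\<Sum>i\<in>insert r {r + 1..<r + 1 + int p}. g i)"
      unfolding S_def by simp
    also have "insert r {r + 1..<r + 1 + int p} = insert (r + int p) {r..<r + int p}" by auto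
    also have "(\<Sum>i\<in>\<dots>. g i) = g (r + int p) + S r"
      unfolding S_def by simp
    finally show ?thesis using assms by (simp add: per_def)
  qed
  have "S r = S 1"
  proof (induction r rule: int_induct[where k = 1])
    case (step2 i)
    then show ?case using shift[of "i - 1"] by simp
  qed (simp_all add: shift)
  moreover have "S 1 = (\<Sum>i\<in>{1..int p}. g i)" unfolding S_def by (rule sum.cong) auto
  ultimately show ?thesis unfolding S_def by simp
qed

lemma int_fun_const_if_steps_vanish:
  fixes z :: "int \<Rightarrow> 'a"
  assumes "\<And>i. z (i + 1) = z i"
  shows "z i = z j"
proof -
  have "z i = z 0" for i
  proof (induction i rule: int_induct[where k = 0])
    case (step2 i)
    then show ?case using assms[of "i - 1"] by simp
  qed (simp_all add: assms)
  then show ?thesis by metis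
qed

lemma Upzero_eq_0_if_steps_vanish:
  fixes z :: "int \<Rightarrow> real"
  assumes p: "1 \<le> p" and z: "z \<in> Upzero p" and steps: "\<forall>i\<in>{r..<r + int p}. z (i + 1) = z i"
  shows "z = (\<lambda>_. 0)"
proof -
  have z_per: "z (j + int p) = z j" for j
    using z by (simp add: Upzero_def per_def)
  have step_per: "per p (\<lambda>i. z (i + 1) - z i)"
    unfolding per_def
  proof
    fix i
    show "z (i + int p + 1) - z (i + int p) = z (i + 1) - z i"
      using z_per[of "i + 1"] z_per[of i] by (simp add: algebra_simps)
  qed
  have "z (i + 1) = z i" for i
    using per_all_from_window[OF step_per p, where P = "\<lambda>x. x = 0"] steps by simp
  then have const: "z i = z 1" for i
    by (rule int_fun_const_if_steps_vanish)
  have "(\<Sum>i\<in>{1..int p}. z i) = (\<Sum>i\<in>{1..int p}. z 1)"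
    by (rule sum.cong[OF refl const])
  then have "real p * z 1 = (\<Sum>i\<in>{1..int p}. z i)" by simp
  also have "\<dots> = 0" using z by (simp add: Upzero_def)
  finally have "z 1 = 0" using p by simp
  then show ?thesis by (metis const)
qed

text \<open>The antiderivative is given by the explicit formula
  \<open>v i = (\<Sum>m<p. m * d (i + m)) / p\<close>; its increment is \<open>d i\<close> because \<open>d\<close> sums to 0
  over every window of length \<open>p\<close>.\<close>
lemma per_antiderivative:
  fixes d :: "int \<Rightarrow> real"
  assumes p: "1 \<le> p" and d: "per p d" and d_sum: "(\<Sum>i\<in>{1..int p}. d i) = 0"
  shows "\<exists>w\<in>Upzero p. \<forall>i. w (i + 1) - w i = d i"
proof -
  define v where "v i = (\<Sum>m<p. real m * d (i + int m)) / real p" for i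
  have v_per: "per p v"
    unfolding per_def v_def
  proof (intro allI arg_cong[where f = "\<lambda>x. x / real p"] sum.cong refl)
    fix i m
    show "real m * d (i + int p + int m) = real m * d (i + int m)"
      using d[unfolded per_def, rule_format, of "i + int m"] by (simp add: ac_simps)
  qed
  have v_step: "v (i + 1) - v i = d i" for i
  proof -
    have window: "(\<Sum>m<p. d (i + 1 + int m)) = 0"
      using per_sum_window[OF d, of "i + 1"] d_sum by (simp add: sum_int_window)
    have "(\<Sum>m<p. real m * d (i + int m)) + real p * d (i + int p)
        = (\<Sum>m<Suc p. real m * d (i + int m))" by simp
    also have "\<dots> = (\<Sum>m<p. real (Suc m) * d (i + 1 + int m))"
      by (subst sum.lessThan_Suc_shift) (simp add: algebra_simps)
    also have "\<dots> = (\<Sum>m<p. real m * d (i + 1 + int m)) + (\<Sum>m<p. d (i + 1 + int m))"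
      by (simp add: sum.distrib algebra_simps)
    finally have "(\<Sum>m<p. real m * d (i + 1 + int m)) - (\<Sum>m<p. real m * d (i + int m))
        = real p * d i"
      using window d by (simp add: per_def)
    then show ?thesis
      using p by (simp add: v_def diff_divide_distrib[symmetric] add.assoc)
  qed
  define w where "w i = v i - (\<Sum>j\<in>{1..int p}. v j) / real p" for i
  have "w \<in> Upzero p"
    using v_per p by (simp add: Upzero_def per_def w_def sum_subtractf)
  moreover have "\<forall>i. w (i + 1) - w i = d i"
    using v_step by (simp add: w_def)
  ultimately show ?thesis by blast
qed

section \<open>Discrete Poincare inequality\<close>

lemma sum_squares_affine:
  fixes \<alpha> \<beta> :: real
  assumes "a \<le> b"
  shows "(\<Sum>k\<in>{a..<b::nat}. (\<alpha> * real k + \<beta>)\<^sup>2) =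
     (\<alpha>\<^sup>2 * (2 * real b ^ 3 - 3 * real b ^ 2 + real b) / 6 + \<alpha> * \<beta> * (real b ^ 2 - real b) + \<beta>\<^sup>2 * real b)
   - (\<alpha>\<^sup>2 * (2 * real a ^ 3 - 3 * real a ^ 2 + real a) / 6 + \<alpha> * \<beta> * (real a ^ 2 - real a) + \<beta>\<^sup>2 * real a)"
proof -
  define F where "F x = \<alpha>\<^sup>2 * (2 * x ^ 3 - 3 * x ^ 2 + x) / 6 + \<alpha> * \<beta> * (x ^ 2 - x) + \<beta>\<^sup>2 * x" for x :: real
  have "(\<alpha> * real k + \<beta>)\<^sup>2 = F (real (Suc k)) - F (real k)" for k
    by (simp add: F_def power2_eq_square power3_eq_cube field_simps)
  then have "(\<Sum>k\<in>{a..<b}. (\<alpha> * real k + \<beta>)\<^sup>2) = (\<Sum>k\<in>{a..<b}. F (real (Suc k)) - F (real k))"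
    by simp
  also have "\<dots> = F (real b) - F (real a)"
    using sum_Suc_diff'[OF assms, of "\<lambda>k. F (real k)"] by simp
  finally show ?thesis by (simp add: F_def)
qed

text \<open>For a mean-zero \<open>N\<close>-periodic sequence with increments \<open>d k\<close>, the value at \<open>n\<close> is
  \<open>\<Sum>k. d k * poincare_kernel N n k\<close>: the first two terms come from summing the increments and
  eliminating the mean, and the constant last term (harmless, since \<open>\<Sum>k. d k = 0\<close>) is the one
  minimising the \<open>\<ell>\<^sup>2\<close> norm of the kernel.\<close>
definition poincare_kernel :: "nat \<Rightarrow> nat \<Rightarrow> nat \<Rightarrow> real" where
  "poincare_kernel N n k = (if k < n then 1 else 0) - (real N - real k) / real N
     - (2 * real n - real N - 1) / (2 * real N)"

lemma poincare_kernel_sq_sum: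
  assumes N: "1 \<le> N" and n: "1 \<le> n" "n \<le> N"
  shows "(\<Sum>k=1..N. (poincare_kernel N n k)\<^sup>2) = (real N ^ 2 - 1) / (12 * real N)"
proof -
  have NN: "real N > 0" using N by simp
  have split: "{1..N} = {1..<n} \<union> {n..<Suc N}" using n by auto
  have "(\<Sum>k=1..N. (poincare_kernel N n k)\<^sup>2)
     = (\<Sum>k\<in>{1..<n}. ((1 / real N) * real k + (real N + 1 - 2 * real n) / (2 * real N))\<^sup>2)
     + (\<Sum>k\<in>{n..<Suc N}. ((1 / real N) * real k + (1 - real N - 2 * real n) / (2 * real N))\<^sup>2)"
    unfolding split
  proof (subst sum.union_disjoint, simp_all only: finite_atLeastLessThan ivl_disj_int_two(3),
      intro arg_cong2[where f = "(+)"] sum.cong refl arg_cong[where f = "\<lambda>x. x\<^sup>2"])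
    fix k assume "k \<in> {1..<n}"
    then show "poincare_kernel N n k = 1 / real N * real k + (real N + 1 - 2 * real n) / (2 * real N)"
      using NN by (simp add: poincare_kernel_def field_simps)
  next
    fix k assume "k \<in> {n..<Suc N}"
    then show "poincare_kernel N n k = 1 / real N * real k + (1 - real N - 2 * real n) / (2 * real N)"
      using NN by (simp add: poincare_kernel_def field_simps)
  qed
  also have "\<dots> = (real N ^ 2 - 1) / (12 * real N)"
    unfolding sum_squares_affine[OF n(1)] sum_squares_affine[OF le_SucI[OF n(2)]] using NN
    by (simp add: field_simps) algebra
  finally show ?thesis .
qed

lemma sum_partial_sums:
  "(\<Sum>n=1..M. \<Sum>k\<in>{1..<n}. (d k :: real)) = (\<Sum>k=1..M. d k * (real M - real k))"
proof (induction M)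
  case (Suc M)
  have "(\<Sum>k\<in>{1..<Suc M}. d k) = (\<Sum>k=1..M. d k)"
    by (rule sum.cong) auto
  with Suc.IH show ?case
    by (simp add: sum.distrib[symmetric] algebra_simps)
qed simp

lemma poincare_kernel_repr:
  fixes U :: "nat \<Rightarrow> real"
  assumes N: "1 \<le> N" and per: "U (Suc N) = U 1" and mean: "(\<Sum>n=1..N. U n) = 0"
    and n: "1 \<le> n" "n \<le> N"
  shows "U n = (\<Sum>k=1..N. (U (Suc k) - U k) * poincare_kernel N n k)"
proof -
  define d where "d k = U (Suc k) - U k" for k
  have partial: "U m = U 1 + (\<Sum>k\<in>{1..<m}. d k)" if "1 \<le> m" for m
    using sum_Suc_diff'[OF that, of U] by (simp add: d_def)
  have d_sum: "(\<Sum>k=1..N. d k) = 0"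
    using partial[of "Suc N"] per by (simp add: atLeastLessThanSuc_atLeastAtMost)
  have "(\<Sum>m=1..N. U 1 + (\<Sum>k\<in>{1..<m}. d k)) = (\<Sum>m=1..N. U m)"
    by (rule sum.cong[OF refl], rule partial[symmetric]) simp
  then have "0 = (\<Sum>m=1..N. U 1 + (\<Sum>k\<in>{1..<m}. d k))"
    using mean by simp
  also have "\<dots> = real N * U 1 + (\<Sum>k=1..N. d k * (real N - real k))"
    unfolding sum.distrib sum_partial_sums by simp
  finally have U1: "U 1 = - (\<Sum>k=1..N. d k * (real N - real k)) / real N"
    using N by (simp add: field_simps)
  have prefix: "(\<Sum>k=1..N. d k * (if k < n then 1 else 0)) = (\<Sum>k\<in>{1..<n}. d k)"
  proof -
    have "(\<Sum>k=1..N. d k * (if k < n then 1 else 0)) = (\<Sum>k=1..N. if k < n then d k else 0)"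
      by (rule sum.cong) auto
    also have "\<dots> = sum d {k\<in>{1..N}. k < n}" by (rule sum.inter_filter[symmetric]) simp
    also have "{k\<in>{1..N}. k < n} = {1..<n}" using n by auto
    finally show ?thesis .
  qed
  have "(\<Sum>k=1..N. d k * poincare_kernel N n k)
      = (\<Sum>k=1..N. d k * (if k < n then 1 else 0) - d k * (real N - real k) / real N
          - d k * ((2 * real n - real N - 1) / (2 * real N)))"
    by (rule sum.cong) (simp_all add: poincare_kernel_def right_diff_distrib)
  also have "\<dots> = (\<Sum>k\<in>{1..<n}. d k) - (\<Sum>k=1..N. d k * (real N - real k)) / real N
        - (\<Sum>k=1..N. d k) * ((2 * real n - real N - 1) / (2 * real N))"
    by (simp only: sum_subtractf sum_divide_distrib sum_distrib_right prefix)
  also have "\<dots> = U n"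
    using partial[OF n(1)] U1 d_sum by simp
  finally show ?thesis unfolding d_def by simp
qed

lemma discrete_poincare:
  fixes U :: "nat \<Rightarrow> real"
  assumes N: "1 \<le> N" and per: "U (Suc N) = U 1" and mean: "(\<Sum>n=1..N. U n) = 0"
  shows "(\<Sum>n=1..N. (U n)\<^sup>2) \<le> real N ^ 2 / 12 * (\<Sum>k=1..N. (U (Suc k) - U k)\<^sup>2)"
proof -
  define S where "S = (\<Sum>k=1..N. (U (Suc k) - U k)\<^sup>2)"
  have S_nonneg: "0 \<le> S" unfolding S_def by (simp add: sum_nonneg)
  have pointwise: "(U n)\<^sup>2 \<le> S * ((real N ^ 2 - 1) / (12 * real N))" if n: "1 \<le> n" "n \<le> N" for n
  proof -
    have "(U n)\<^sup>2 \<le> S * (\<Sum>k=1..N. (poincare_kernel N n k)\<^sup>2)"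
      unfolding poincare_kernel_repr[OF N per mean n] S_def by (rule Cauchy_Schwarz_ineq_sum)
    then show ?thesis unfolding poincare_kernel_sq_sum[OF N n] .
  qed
  have "(\<Sum>n=1..N. (U n)\<^sup>2) \<le> (\<Sum>n=1..N. S * ((real N ^ 2 - 1) / (12 * real N)))"
    by (rule sum_mono) (use pointwise in auto)
  also have "\<dots> = S * (real N ^ 2 - 1) / 12" using N by simp
  also have "\<dots> \<le> real N ^ 2 / 12 * S" using S_nonneg by (simp add: field_simps)
  finally show ?thesis unfolding S_def .
qed

lemma sum_int_nat: "(\<Sum>i\<in>{1..int N}. F i) = (\<Sum>n=1..N. F (int n))"
proof -
  have "{1..int N} = int ` {1..N}" by (simp add: image_int_atLeastAtMost)
  then show ?thesis by (simp add: sum.reindex)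
qed

lemma poincare_Uzero:
  assumes N: "1 \<le> N" and u: "u \<in> Uzero N"
  shows "L2 N u \<le> 1 / (2 * sqrt 3) * H1 N u"
proof -
  define U where "U n = u (int n)" for n
  have NN: "real N > 0" using N by simp
  have "u (1 + int N) = u 1"
    using u by (simp add: Uzero_def per_def)
  then have per: "U (Suc N) = U 1"
    by (simp add: U_def add.commute)
  have mean: "(\<Sum>n=1..N. U n) = 0"
    using u NN unfolding Uzero_def avgX_def U_def sum_int_nat by simp
  have L2_eq: "L2 N u = sqrt ((\<Sum>n=1..N. (U n)\<^sup>2) / real N)"
    unfolding L2_def ipX_def sum_int_nat U_def by (simp add: power2_eq_square)
  have H1_eq: "H1 N u = sqrt (real N * (\<Sum>k=1..N. (U (Suc k) - U k)\<^sup>2))"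
  proof -
    have "H1 N u = sqrt ((1 / real N) * (\<Sum>n=1..N. (real N * (U (Suc n) - U n))\<^sup>2))"
      unfolding H1_def L2_def ipX_def sum_int_nat U_def Dd_def eps_def
      by (simp add: power2_eq_square add.commute mult.commute mult.left_commute)
    also have "(\<Sum>n=1..N. (real N * (U (Suc n) - U n))\<^sup>2) = real N ^ 2 * (\<Sum>n=1..N. (U (Suc n) - U n)\<^sup>2)"
      by (simp add: power_mult_distrib sum_distrib_left)
    finally show ?thesis using NN by (simp add: power2_eq_square)
  qed
  have "(\<Sum>n=1..N. (U n)\<^sup>2) / real N \<le> real N * (\<Sum>k=1..N. (U (Suc k) - U k)\<^sup>2) / 12"
    using discrete_poincare[OF N per mean] NN by (simp add: field_simps power2_eq_square)
  then have "L2 N u \<le> sqrt (real N * (\<Sum>k=1..N. (U (Suc k) - U k)\<^sup>2)) / sqrt 12"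
    unfolding L2_eq real_sqrt_divide[symmetric] by (rule real_sqrt_le_mono)
  also have "sqrt 12 = 2 * sqrt 3"
    using real_sqrt_mult[of 4 3] by simp
  finally show ?thesis unfolding H1_eq by simp
qed

section \<open>The \<open>H\<^sup>-\<^sup>1\<close> seminorm\<close>

lemma L2_nonneg: "0 \<le> L2 N u"
  unfolding L2_def ipX_def by (simp add: sum_nonneg)

lemma H1_nonneg: "0 \<le> H1 N u"
  unfolding H1_def by (rule L2_nonneg)

lemma ipX_le_L2_mult_L2: "ipX N f w \<le> L2 N f * L2 N w"
proof -
  have "(\<Sum>i\<in>{1..int N}. f i * w i) \<le> sqrt ((\<Sum>i\<in>{1..int N}. f i * w i)\<^sup>2)" by simp
  also have "\<dots> \<le> sqrt ((\<Sum>i\<in>{1..int N}. (f i)\<^sup>2) * (\<Sum>i\<in>{1..int N}. (w i)\<^sup>2))"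
    by (rule real_sqrt_le_mono, rule Cauchy_Schwarz_ineq_sum)
  finally have "(\<Sum>i\<in>{1..int N}. f i * w i)
      \<le> sqrt (\<Sum>i\<in>{1..int N}. (f i)\<^sup>2) * sqrt (\<Sum>i\<in>{1..int N}. (w i)\<^sup>2)"
    by (simp add: real_sqrt_mult)
  moreover have "L2 N f * L2 N w
      = (1 / real N) * (sqrt (\<Sum>i\<in>{1..int N}. (f i)\<^sup>2) * sqrt (\<Sum>i\<in>{1..int N}. (w i)\<^sup>2))"
    unfolding L2_def ipX_def by (simp add: real_sqrt_mult real_sqrt_divide power2_eq_square)
  ultimately show ?thesis
    unfolding ipX_def by (simp add: divide_right_mono)
qed

lemma Uzero_eq_0_if_H1_eq_0:
  assumes N: "1 \<le> N" and u: "u \<in> Uzero N" and H1_0: "H1 N u = 0"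
  shows "u = (\<lambda>_. 0)"
proof -
  have "L2 N u = 0"
    using poincare_Uzero[OF N u] H1_0 L2_nonneg[of N u] by simp
  then have "(\<Sum>i\<in>{1..int N}. (u i)\<^sup>2) = 0"
    using N by (simp add: L2_def ipX_def power2_eq_square)
  then have "\<forall>i\<in>{1..int N}. u i = 0"
    by (simp add: sum_nonneg_eq_0_iff)
  moreover have "per N u" using u by (simp add: Uzero_def)
  ultimately show ?thesis
    using per_all_from_period[OF _ N, where P = "\<lambda>x. x = 0"] by auto
qed

lemma H1_pos_Uzero: "1 \<le> N \<Longrightarrow> w \<in> Uzero N \<Longrightarrow> w \<noteq> (\<lambda>_. 0) \<Longrightarrow> 0 < H1 N w"
  using Uzero_eq_0_if_H1_eq_0 H1_nonneg[of N w] by force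

lemma bdd_above_Hm1_quotients:
  assumes N: "1 \<le> N"
  shows "bdd_above (insert 0 {ipX N f w / H1 N w | w. w \<in> Uzero N \<and> w \<noteq> (\<lambda>_. 0)})"
proof (rule bdd_aboveI[where M = "L2 N f / (2 * sqrt 3)"])
  fix x assume "x \<in> insert 0 {ipX N f w / H1 N w | w. w \<in> Uzero N \<and> w \<noteq> (\<lambda>_. 0)}"
  then consider "x = 0" | w where "w \<in> Uzero N" "w \<noteq> (\<lambda>_. 0)" "x = ipX N f w / H1 N w"
    by blast
  then show "x \<le> L2 N f / (2 * sqrt 3)"
  proof cases
    case 1 then show ?thesis using L2_nonneg[of N f] by simp
  next
    case (2 w)
    have "ipX N f w \<le> L2 N f * L2 N w" by (rule ipX_le_L2_mult_L2)
    also have "\<dots> \<le> L2 N f * (1 / (2 * sqrt 3) * H1 N w)"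
      by (rule mult_left_mono[OF poincare_Uzero[OF N 2(1)] L2_nonneg])
    finally show ?thesis
      using H1_pos_Uzero[OF N 2(1,2)] 2(3) by (simp add: pos_divide_le_eq)
  qed
qed

lemma Hm1_nonneg: "1 \<le> N \<Longrightarrow> 0 \<le> Hm1 N f"
  unfolding Hm1_def by (rule cSup_upper[OF _ bdd_above_Hm1_quotients]) simp_all

lemma ipX_le_Hm1_mult_H1:
  assumes N: "1 \<le> N" and v: "v \<in> Uzero N"
  shows "ipX N f v \<le> Hm1 N f * H1 N v"
proof (cases "v = (\<lambda>_. 0)")
  case True
  then show ?thesis by (simp add: ipX_def H1_def L2_def Dd_def)
next
  case False
  have "ipX N f v / H1 N v \<le> Hm1 N f"
    unfolding Hm1_def by (rule cSup_upper[OF _ bdd_above_Hm1_quotients[OF N]]) (use v False in auto)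
  then show ?thesis using H1_pos_Uzero[OF N v False] by (simp add: pos_divide_le_eq)
qed

section \<open>Piecewise affine functions on the coarse mesh\<close>

lemma mesh_idx_less: "mesh N K idx \<Longrightarrow> k \<in> {1..K} \<Longrightarrow> idx k < idx (Suc k)"
  unfolding mesh_def by (cases "k < K") auto

lemma Hk_eq_sum: "idx k \<le> idx (Suc k) \<Longrightarrow> Hk N idx k = (1 / real N) * (\<Sum>i\<in>{idx k..<idx (Suc k)}. 1)"
  unfolding Hk_def eps_def by simp

lemma Hk_pos: "1 \<le> N \<Longrightarrow> mesh N K idx \<Longrightarrow> k \<in> {1..K} \<Longrightarrow> 0 < Hk N idx k"
  using mesh_idx_less[of N K idx k] unfolding Hk_def eps_def by simp

lemma Hk_le_Hmax: "k \<in> {1..K} \<Longrightarrow> Hk N idx k \<le> Hmax N K idx"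
  unfolding Hmax_def by (rule Max_ge) auto

lemma sum_split_at_nondecreasing:
  fixes idx :: "nat \<Rightarrow> int"
  assumes "\<forall>k\<in>{1..K}. idx k \<le> idx (Suc k)"
  shows "(\<Sum>i\<in>{idx 1..<idx (Suc K)}. F i) = (\<Sum>k=1..K. \<Sum>i\<in>{idx k..<idx (Suc k)}. F i)"
  using assms
proof (induction K)
  case (Suc K)
  have "idx 1 \<le> idx (Suc K)"
    by (rule lift_Suc_mono_le_ivl[where N = "{1..Suc K}"]) (use Suc.prems in auto)
  moreover have "idx (Suc K) \<le> idx (Suc (Suc K))" using Suc.prems by simp
  ultimately have "{idx 1..<idx (Suc (Suc K))} = {idx 1..<idx (Suc K)} \<union> {idx (Suc K)..<idx (Suc (Suc K))}"
    by auto
  then have "(\<Sum>i\<in>{idx 1..<idx (Suc (Suc K))}. F i)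
      = (\<Sum>i\<in>{idx 1..<idx (Suc K)}. F i) + (\<Sum>i\<in>{idx (Suc K)..<idx (Suc (Suc K))}. F i)"
    by (simp add: sum.union_disjoint)
  with Suc show ?case by simp
qed simp

lemma UHper_slope_const:
  assumes v: "v \<in> UHper N K idx" and k: "k \<in> {1..K}" and m: "mesh N K idx"
    and i: "i \<in> {idx k..<idx (Suc k)}"
  shows "Dd N v i = Dd N v (idx k)"
proof -
  obtain a b where ab: "\<forall>j\<in>{idx k..idx (Suc k)}. v j = a + b * real_of_int j"
    using v k unfolding UHper_def affine_on_def by blast
  have "v (i + 1) - v i = b" and "v (idx k + 1) - v (idx k) = b"
    using ab i mesh_idx_less[OF m k] by (auto simp: algebra_simps)
  then show ?thesis by (simp add: Dd_def)
qed

lemma ipX_UHper_elementwise: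
  assumes m: "mesh N K idx" and u: "u \<in> UHper N K idx" and v: "v \<in> UHper N K idx"
  shows "ipX N (\<lambda>i. a i * Dd N u i) (Dd N v) =
     (\<Sum>k=1..K. Dd N u (idx k) * Dd N v (idx k) * ((1 / real N) * (\<Sum>i\<in>{idx k..<idx (Suc k)}. a i)))"
proof -
  have nondecr: "\<forall>k\<in>{1..K}. idx k \<le> idx (Suc k)"
    using mesh_idx_less[OF m] by fastforce
  have element: "(\<Sum>i\<in>{idx k..<idx (Suc k)}. a i * Dd N u i * Dd N v i)
      = Dd N u (idx k) * Dd N v (idx k) * (\<Sum>i\<in>{idx k..<idx (Suc k)}. a i)" if k: "k \<in> {1..K}" for k
  proof -
    have "(\<Sum>i\<in>{idx k..<idx (Suc k)}. a i * Dd N u i * Dd N v i)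
        = (\<Sum>i\<in>{idx k..<idx (Suc k)}. Dd N u (idx k) * Dd N v (idx k) * a i)"
      by (rule sum.cong[OF refl]) (simp only: UHper_slope_const[OF u k m] UHper_slope_const[OF v k m] ac_simps)
    then show ?thesis by (simp add: sum_distrib_left)
  qed
  have "{1..int N} = {idx 1..<idx (Suc K)}" using m by (auto simp: mesh_def)
  then have "ipX N (\<lambda>i. a i * Dd N u i) (Dd N v)
      = (1 / real N) * (\<Sum>k=1..K. \<Sum>i\<in>{idx k..<idx (Suc k)}. a i * Dd N u i * Dd N v i)"
    unfolding ipX_def
    using sum_split_at_nondecreasing[OF nondecr, of "\<lambda>i. a i * Dd N u i * Dd N v i"] by simp
  also have "\<dots> = (1 / real N) * (\<Sum>k=1..K. Dd N u (idx k) * Dd N v (idx k) * (\<Sum>i\<in>{idx k..<idx (Suc k)}. a i))"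
    using element by simp
  also have "\<dots> = (\<Sum>k=1..K. Dd N u (idx k) * Dd N v (idx k) * ((1 / real N) * (\<Sum>i\<in>{idx k..<idx (Suc k)}. a i)))"
    by (simp add: sum_distrib_left ac_simps)
  finally show ?thesis .
qed

lemma H1_UHper_elementwise:
  assumes m: "mesh N K idx" and v: "v \<in> UHper N K idx"
  shows "H1 N v = sqrt (\<Sum>k=1..K. Hk N idx k * (Dd N v (idx k))\<^sup>2)"
proof -
  have "ipX N (Dd N v) (Dd N v) = ipX N (\<lambda>i. 1 * Dd N v i) (Dd N v)" by simp
  also have "\<dots> = (\<Sum>k=1..K. Hk N idx k * (Dd N v (idx k))\<^sup>2)"
    unfolding ipX_UHper_elementwise[OF m v v]
    by (rule sum.cong[OF refl]) (simp add: Hk_eq_sum less_imp_le[OF mesh_idx_less[OF m]] power2_eq_square)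
  finally show ?thesis unfolding H1_def L2_def by simp
qed

lemma UHzero_diff:
  assumes "u \<in> UHzero N K idx" "v \<in> UHzero N K idx"
  shows "(\<lambda>i. u i - v i) \<in> UHzero N K idx"
proof -
  have "affine_on (\<lambda>i. u i - v i) A" if hu: "affine_on u A" and hv: "affine_on v A" for A
  proof -
    obtain a1 b1 a2 b2 where "\<forall>i\<in>A. u i = a1 + b1 * real_of_int i" "\<forall>i\<in>A. v i = a2 + b2 * real_of_int i"
      using hu hv unfolding affine_on_def by blast
    then have "\<forall>i\<in>A. u i - v i = (a1 - a2) + (b1 - b2) * real_of_int i"
      by (simp add: algebra_simps)
    then show ?thesis unfolding affine_on_def by blast
  qed
  with assms show ?thesis
    unfolding UHzero_def UHper_def Uzero_def per_def avgX_def
    by (auto simp: sum_subtractf right_diff_distrib)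
qed

lemma Dd_diff: "Dd N (\<lambda>i. u i - v i) i = Dd N u i - Dd N v i"
  unfolding Dd_def by (simp add: diff_divide_distrib)

section \<open>Cell problems\<close>

lemma affine_on_UNIV_eq:
  assumes "affine_on l1 UNIV" "affine_on l2 UNIV" "l1 x = l2 x" "l1 (x + 1) = l2 (x + 1)"
  shows "l1 = l2"
proof -
  obtain a1 b1 a2 b2 where l1: "\<And>i. l1 i = a1 + b1 * real_of_int i" and l2: "\<And>i. l2 i = a2 + b2 * real_of_int i"
    using assms(1,2) unfolding affine_on_def by blast
  have "b1 = b2" using assms(3,4) by (simp add: l1 l2 algebra_simps)
  moreover from this have "a1 = a2" using assms(3) by (simp add: l1 l2)
  ultimately show ?thesis by (simp add: fun_eq_iff l1 l2)
qed

lemma Upzero_eq_0_if_energy_eq_0: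
  fixes z a :: "int \<Rightarrow> real"
  assumes N: "1 \<le> N" and p: "1 \<le> p" and z: "z \<in> Upzero p" and a: "\<forall>i. 0 < a i"
    and energy: "(\<Sum>i\<in>{r..<r + int p}. a i * (Dd N z i)\<^sup>2) = 0"
  shows "z = (\<lambda>_. 0)"
proof (rule Upzero_eq_0_if_steps_vanish[OF p z], rule ballI)
  fix i assume i: "i \<in> {r..<r + int p}"
  have "a i * (Dd N z i)\<^sup>2 = 0"
    using energy i a by (simp add: sum_nonneg_eq_0_iff less_imp_le)
  then have "Dd N z i = 0" using a by (metis less_irrefl mult_eq_0_iff power_eq_0_iff)
  then show "z (i + 1) = z i" using eps_pos[OF N] by (simp add: Dd_def)
qed

lemma cell_ok_unique:
  assumes N: "1 \<le> N" and p: "1 \<le> p" and pos: "\<forall>i j. 0 < psi i j"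
    and lt: "idx k < idx (Suc k)"
    and r1: "cell_ok N p psi idx rep coll k v r1" and r2: "cell_ok N p psi idx rep coll k v r2"
  shows "r1 = r2"
proof -
  obtain l1 w1 where l1: "affine_on l1 UNIV" "\<forall>i\<in>{idx k..idx (Suc k)}. l1 i = v i"
    and w1: "w1 \<in> Upzero p" and r1_eq: "r1 = (\<lambda>i. l1 i + w1 i)"
    and orth1: "\<forall>s\<in>Upzero p. ipRep p (rep k) (\<lambda>i. psicoll psi (coll k) i * Dd N r1 i) (Dd N s) = 0"
    using r1 unfolding cell_ok_def by blast
  obtain l2 w2 where l2: "affine_on l2 UNIV" "\<forall>i\<in>{idx k..idx (Suc k)}. l2 i = v i"
    and w2: "w2 \<in> Upzero p" and r2_eq: "r2 = (\<lambda>i. l2 i + w2 i)"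
    and orth2: "\<forall>s\<in>Upzero p. ipRep p (rep k) (\<lambda>i. psicoll psi (coll k) i * Dd N r2 i) (Dd N s) = 0"
    using r2 unfolding cell_ok_def by blast
  have "l1 = l2"
    by (rule affine_on_UNIV_eq[OF l1(1) l2(1), of "idx k"]) (use l1(2) l2(2) lt in auto)
  define z where "z i = w1 i - w2 i" for i
  have z: "z \<in> Upzero p"
    using w1 w2 unfolding Upzero_def per_def z_def by (simp add: sum_subtractf)
  have Dz: "Dd N z i = Dd N r1 i - Dd N r2 i" for i
    unfolding r1_eq r2_eq \<open>l1 = l2\<close> z_def Dd_def by (simp add: diff_divide_distrib[symmetric])
  have "(\<Sum>i\<in>{rep k..<rep k + int p}. psi (coll k) i * (Dd N z i)\<^sup>2)
      = real p * (ipRep p (rep k) (\<lambda>i. psicoll psi (coll k) i * Dd N r1 i) (Dd N z)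
          - ipRep p (rep k) (\<lambda>i. psicoll psi (coll k) i * Dd N r2 i) (Dd N z))"
    using p unfolding ipRep_def psicoll_def
    by (simp add: Dz sum_subtractf[symmetric] power2_eq_square algebra_simps)
  also have "\<dots> = 0" using orth1 orth2 z by simp
  finally have energy: "(\<Sum>i\<in>{rep k..<rep k + int p}. psi (coll k) i * (Dd N z i)\<^sup>2) = 0" .
  have "z = (\<lambda>_. 0)"
    by (rule Upzero_eq_0_if_energy_eq_0[OF N p z _ energy]) (use pos in simp)
  then show ?thesis using r1_eq r2_eq \<open>l1 = l2\<close> by (simp add: z_def fun_eq_iff)
qed

lemma ipRep_const_Dd_Upzero:
  assumes "s \<in> Upzero p"
  shows "ipRep p r (\<lambda>_. \<kappa>) (Dd N s) = 0"
proof -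
  have "ipRep p r (\<lambda>_. \<kappa>) (Dd N s) = \<kappa> / eps N / real p * (\<Sum>i\<in>{r..<r + int p}. s (i + 1) - s i)"
    unfolding ipRep_def Dd_def by (simp add: sum_distrib_left sum_divide_distrib mult_ac)
  also have "\<dots> = 0"
    using assms by (simp add: sum_window_telescope Upzero_def per_def)
  finally show ?thesis .
qed

text \<open>The reconstruction is the affine interpolant plus the periodic corrector whose increments
  are \<open>b * (\<psi>\<^sup>0 / \<psi> - 1)\<close>, \<open>b\<close> the slope of \<open>v\<close>. Its flux \<open>\<psi> * D r\<close> is constant, hence
  orthogonal to the difference quotient of every periodic function.\<close>
lemma cell_ok_with_constant_flux:
  assumes N: "1 \<le> N" and p: "1 \<le> p" and pos: "\<forall>i j. 0 < psi i j" and perp: "\<forall>i. per p (psi i)"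
    and m: "mesh N K idx" and k: "k \<in> {1..K}" and v: "v \<in> UHper N K idx"
  shows "\<exists>r. cell_ok N p psi idx rep coll k v r
    \<and> (\<forall>i. Dd N r i = Dd N v (idx k) * psi0 p psi (coll k) / psi (coll k) i)"
proof -
  define c where "c = coll k"
  define h where "h = psi0 p psi c"
  obtain a b where ab: "\<forall>j\<in>{idx k..idx (Suc k)}. v j = a + b * real_of_int j"
    using v k unfolding UHper_def affine_on_def by blast
  have slope: "Dd N v (idx k) = b / eps N"
    using ab mesh_idx_less[OF m k] by (simp add: Dd_def algebra_simps)
  define S where "S = (\<Sum>j\<in>{1..int p}. 1 / psi c j)"
  have "S > 0" unfolding S_def by (rule sum_pos) (use pos p in auto)
  then have h_S: "h * S = real p" unfolding h_def psi0_def avgY_def S_def by simp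
  define d where "d i = b * (h / psi c i - 1)" for i
  have "per p d" using perp unfolding d_def per_def by simp
  moreover have "(\<Sum>i\<in>{1..int p}. d i) = b * (h * S - real p)"
    unfolding d_def S_def by (simp add: sum_subtractf sum_distrib_left algebra_simps)
  then have "(\<Sum>i\<in>{1..int p}. d i) = 0" using h_S by simp
  ultimately obtain w where w: "w \<in> Upzero p" "\<forall>i. w (i + 1) - w i = d i"
    using per_antiderivative[OF p] by blast
  define l where "l i = a + b * real_of_int i" for i
  define r where "r = (\<lambda>i. l i + w i)"
  have Dr: "Dd N r i = Dd N v (idx k) * h / psi c i" for i
  proof -
    have "r (i + 1) - r i = b + d i"
      unfolding r_def l_def using w(2)[rule_format, of i] by (simp add: algebra_simps)
    also have "\<dots> = b * h / psi c i" unfolding d_def using pos by (simp add: field_simps)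
    finally have "Dd N r i = b * h / psi c i / eps N" by (simp add: Dd_def)
    then show ?thesis unfolding slope by simp
  qed
  have flux: "(\<lambda>i. psicoll psi (coll k) i * Dd N r i) = (\<lambda>_. Dd N v (idx k) * h)"
  proof
    fix i
    show "psicoll psi (coll k) i * Dd N r i = Dd N v (idx k) * h"
      using pos[rule_format, of c i] by (simp add: psicoll_def Dr c_def)
  qed
  have "cell_ok N p psi idx rep coll k v r"
    unfolding cell_ok_def flux
  proof (intro exI conjI ballI)
    show "affine_on l UNIV" unfolding affine_on_def l_def by blast
    show "l i = v i" if "i \<in> {idx k..idx (Suc k)}" for i using ab that unfolding l_def by simp
  qed (use w(1) r_def ipRep_const_Dd_Upzero in simp_all)
  with Dr show ?thesis unfolding h_def c_def by blast
qed

lemma Rk_slopes: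
  assumes N: "1 \<le> N" and p: "1 \<le> p" and pos: "\<forall>i j. 0 < psi i j" and perp: "\<forall>i. per p (psi i)"
    and m: "mesh N K idx" and k: "k \<in> {1..K}" and v: "v \<in> UHper N K idx"
  shows "Dd N (Rk N p psi idx rep coll k v) i = Dd N v (idx k) * psi0 p psi (coll k) / psi (coll k) i"
proof -
  obtain r where ok: "cell_ok N p psi idx rep coll k v r"
    and Dr: "\<forall>i. Dd N r i = Dd N v (idx k) * psi0 p psi (coll k) / psi (coll k) i"
    using cell_ok_with_constant_flux[OF assms] by blast
  have "Rk N p psi idx rep coll k v = r"
    unfolding Rk_def using ok cell_ok_unique[OF N p pos mesh_idx_less[OF m k] _ ok] by (rule the_equality)
  with Dr show ?thesis by simp
qed

lemma ipRep_Rk: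
  assumes N: "1 \<le> N" and p: "1 \<le> p" and pos: "\<forall>i j. 0 < psi i j" and perp: "\<forall>i. per p (psi i)"
    and m: "mesh N K idx" and k: "k \<in> {1..K}" and u: "u \<in> UHper N K idx" and v: "v \<in> UHper N K idx"
  shows "ipRep p (rep k) (\<lambda>i. psicoll psi (coll k) i * Dd N (Rk N p psi idx rep coll k u) i)
            (Dd N (Rk N p psi idx rep coll k v)) = Dd N u (idx k) * Dd N v (idx k) * psi0 p psi (coll k)"
proof -
  define c where "c = coll k"
  define h where "h = psi0 p psi c"
  define S where "S = (\<Sum>j\<in>{1..int p}. 1 / psi c j)"
  have "S > 0" unfolding S_def by (rule sum_pos) (use pos p in auto)
  then have h_S: "h * S = real p" unfolding h_def psi0_def avgY_def S_def by simp
  have window: "(\<Sum>i\<in>{rep k..<rep k + int p}. 1 / psi c i) = S"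
    unfolding S_def by (rule per_sum_window) (use perp in \<open>simp add: per_def\<close>)
  have pointwise: "psicoll psi (coll k) i * Dd N (Rk N p psi idx rep coll k u) i * Dd N (Rk N p psi idx rep coll k v) i
      = Dd N u (idx k) * Dd N v (idx k) * h * h * (1 / psi c i)" for i
    unfolding Rk_slopes[OF N p pos perp m k u] Rk_slopes[OF N p pos perp m k v]
    using pos[rule_format, of c i] by (simp add: psicoll_def c_def h_def field_simps power2_eq_square)
  have "ipRep p (rep k) (\<lambda>i. psicoll psi (coll k) i * Dd N (Rk N p psi idx rep coll k u) i)
            (Dd N (Rk N p psi idx rep coll k v))
      = Dd N u (idx k) * Dd N v (idx k) * h * h / real p * (\<Sum>i\<in>{rep k..<rep k + int p}. 1 / psi c i)"
    unfolding ipRep_def pointwise by (simp add: sum_distrib_left)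
  also have "\<dots> = Dd N u (idx k) * Dd N v (idx k) * h"
    unfolding window using h_S p by (simp add: field_simps)
  finally show ?thesis unfolding h_def c_def .
qed

section \<open>Standing assumptions and the homogenized coefficient\<close>

lemma twoscale_all_from_period:
  assumes N: "1 \<le> N" and p: "1 \<le> p" and g: "twoscale N p g"
    and period: "\<forall>i\<in>{1..int N}. \<forall>j\<in>{1..int p}. P (g i j)"
  shows "P (g i j)"
proof -
  have "per p (g i')" for i' using g unfolding twoscale_def per_def by simp
  then have "\<forall>i\<in>{1..int N}. P (g i j)"
    using per_all_from_period[OF _ p, where P = P] period by blast
  moreover have "per N (\<lambda>i. g i j)" using g unfolding twoscale_def per_def by simp
  ultimately show ?thesis
    using per_all_from_period[OF _ N, where P = P] by blast
qed

lemma standingD: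
  assumes "standing N p psi c C C' f K idx rep coll"
  shows "1 \<le> N" "1 \<le> p" "0 < c" "mesh N K idx"
  using assms by (simp_all add: standing_def A1_def)

lemma standing_psi_bounds:
  assumes st: "standing N p psi c C C' f K idx rep coll"
  shows "c \<le> psi i j \<and> psi i j \<le> C"
proof -
  have N: "1 \<le> N" and p: "1 \<le> p" and ts: "twoscale N p psi" and A1: "A1 N p psi c C"
    using st by (simp_all add: standing_def)
  show ?thesis
    by (rule twoscale_all_from_period[OF N p ts, where P = "\<lambda>x. c \<le> x \<and> x \<le> C"])
      (use A1 in \<open>simp add: A1_def\<close>)
qed

lemma standing_psi_pos:
  assumes "standing N p psi c C C' f K idx rep coll"
  shows "0 < psi i j"
  using standing_psi_bounds[OF assms] standingD(3)[OF assms] by (meson less_le_trans)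

lemma standing_psi_step:
  assumes st: "standing N p psi c C C' f K idx rep coll"
  shows "\<bar>psi (i + 1) j - psi i j\<bar> \<le> C' * eps N"
proof -
  have N: "1 \<le> N" and p: "1 \<le> p" and ts: "twoscale N p psi" and A2: "A2 N p psi C'"
    using st by (simp_all add: standing_def)
  have "twoscale N p (DX N psi)"
    using ts unfolding twoscale_def DX_def by (metis add.commute add.left_commute)
  then have "\<bar>DX N psi i j\<bar> \<le> C'"
    using twoscale_all_from_period[OF N p, where P = "\<lambda>x. \<bar>x\<bar> \<le> C'"] A2 unfolding A2_def by blast
  then show ?thesis
    using eps_pos[OF N] unfolding DX_def by (simp add: abs_divide pos_divide_le_eq)
qed

lemma standing_psi_per: "standing N p psi c C C' f K idx rep coll \<Longrightarrow> per p (psi i)"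
  by (simp add: standing_def twoscale_def per_def)

lemma standing_psi0_per: "standing N p psi c C C' f K idx rep coll \<Longrightarrow> per N (psi0 p psi)"
  by (simp add: standing_def twoscale_def per_def psi0_def avgY_def)

lemma standing_coll_in_element:
  assumes "standing N p psi c C C' f K idx rep coll" and "k \<in> {1..K}"
  shows "coll k \<in> {idx k..<idx (Suc k)}"
proof -
  have "sampling p K idx rep coll" using assms(1) by (simp add: standing_def)
  with assms(2) show ?thesis unfolding sampling_def by fastforce
qed

lemma psi0_bounds:
  assumes p: "1 \<le> p" and c: "0 < c" and bounds: "\<And>j. c \<le> psi i j \<and> psi i j \<le> C"
  shows "c \<le> psi0 p psi i" "psi0 p psi i \<le> C"
proof -
  have C: "0 < C" using bounds c by (meson less_le_trans order.trans)
  define A where "A = (1 / real p) * (\<Sum>j\<in>{1..int p}. 1 / psi i j)"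
  have "(\<Sum>j\<in>{1..int p}. 1 / psi i j) \<le> (\<Sum>j\<in>{1..int p}. 1 / c)"
    by (rule sum_mono, rule frac_le) (use bounds c in auto)
  then have A_le: "A * c \<le> 1" using p c unfolding A_def by (simp add: field_simps)
  have "(\<Sum>j\<in>{1..int p}. 1 / C) \<le> (\<Sum>j\<in>{1..int p}. 1 / psi i j)"
    by (rule sum_mono, rule frac_le) (use bounds c C in \<open>auto intro: less_le_trans\<close>)
  then have A_ge: "1 \<le> A * C" using p C unfolding A_def by (simp add: field_simps)
  have A_pos: "0 < A" using A_ge C by (metis mult_nonpos_nonneg not_le zero_less_one less_le_trans less_imp_le)
  have psi0_eq: "psi0 p psi i = 1 / A" unfolding A_def psi0_def avgY_def by simp
  show "c \<le> psi0 p psi i" using A_le A_pos unfolding psi0_eq by (simp add: le_divide_eq mult.commute)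
  show "psi0 p psi i \<le> C" using A_ge A_pos unfolding psi0_eq by (simp add: divide_le_eq mult.commute)
qed

lemma abs_inverse_diff_le:
  fixes x y m :: real
  assumes "0 < m" "m \<le> x" "m \<le> y"
  shows "\<bar>1 / x - 1 / y\<bar> \<le> \<bar>x - y\<bar> / m\<^sup>2"
proof -
  have xy: "0 < x" "0 < y" using assms by auto
  then have "\<bar>1 / x - 1 / y\<bar> = \<bar>x - y\<bar> / (x * y)"
    by (simp add: field_simps abs_minus_commute)
  also have "\<dots> \<le> \<bar>x - y\<bar> / m\<^sup>2"
    by (rule divide_left_mono) (use assms xy in \<open>auto simp: power2_eq_square intro: mult_mono\<close>)
  finally show ?thesis .
qed

text \<open>The harmonic mean is Lipschitz in \<open>x\<close> because \<open>1/\<psi>\<close> is, with constant \<open>B/c\<^sup>2\<close>, and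
  inversion of the mean (which is at least \<open>1/C\<close>) costs another factor \<open>C\<^sup>2\<close>.\<close>
lemma psi0_lipschitz:
  assumes p: "1 \<le> p" and c: "0 < c" and bounds: "\<And>i j. c \<le> psi i j \<and> psi i j \<le> C"
    and steps: "\<And>i j. \<bar>psi (i + 1) j - psi i j\<bar> \<le> B"
  shows "\<bar>psi0 p psi (i + 1) - psi0 p psi i\<bar> \<le> C\<^sup>2 * B / c\<^sup>2"
proof -
  have C: "0 < C" using bounds c by (meson less_le_trans order.trans)
  define a where "a i = (1 / real p) * (\<Sum>j\<in>{1..int p}. 1 / psi i j)" for i
  have psi0_eq: "psi0 p psi i = 1 / a i" for i unfolding a_def psi0_def avgY_def by simp
  have a_ge: "1 / C \<le> a i" for i
  proof -
    have "(\<Sum>j\<in>{1..int p}. 1 / C) \<le> (\<Sum>j\<in>{1..int p}. 1 / psi i j)"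
      by (rule sum_mono, rule frac_le) (use bounds c C in \<open>auto intro: less_le_trans\<close>)
    then show ?thesis using p unfolding a_def by (simp add: field_simps)
  qed
  have sum_bound: "\<bar>\<Sum>j\<in>{1..int p}. 1 / psi (i + 1) j - 1 / psi i j\<bar> \<le> (\<Sum>j\<in>{1..int p}. B / c\<^sup>2)"
  proof (rule order_trans[OF sum_abs sum_mono])
    fix j
    have "\<bar>1 / psi (i + 1) j - 1 / psi i j\<bar> \<le> \<bar>psi (i + 1) j - psi i j\<bar> / c\<^sup>2"
      by (rule abs_inverse_diff_le) (use c bounds in auto)
    also have "\<dots> \<le> B / c\<^sup>2" using steps by (simp add: divide_right_mono)
    finally show "\<bar>1 / psi (i + 1) j - 1 / psi i j\<bar> \<le> B / c\<^sup>2" .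
  qed
  have "a (i + 1) - a i = (1 / real p) * (\<Sum>j\<in>{1..int p}. 1 / psi (i + 1) j - 1 / psi i j)"
    unfolding a_def by (simp add: sum_subtractf right_diff_distrib)
  then have "\<bar>a (i + 1) - a i\<bar> = (1 / real p) * \<bar>\<Sum>j\<in>{1..int p}. 1 / psi (i + 1) j - 1 / psi i j\<bar>"
    by (simp add: abs_mult)
  also have "\<dots> \<le> (1 / real p) * (\<Sum>j\<in>{1..int p}. B / c\<^sup>2)"
    by (rule mult_left_mono[OF sum_bound]) simp
  also have "\<dots> = B / c\<^sup>2" using p by simp
  finally have a_step: "\<bar>a (i + 1) - a i\<bar> \<le> B / c\<^sup>2" .
  have "\<bar>psi0 p psi (i + 1) - psi0 p psi i\<bar> \<le> \<bar>a (i + 1) - a i\<bar> / (1 / C)\<^sup>2"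
    unfolding psi0_eq by (rule abs_inverse_diff_le) (use C a_ge in auto)
  also have "\<dots> \<le> C\<^sup>2 * (B / c\<^sup>2)"
    using mult_left_mono[OF a_step, of "C\<^sup>2"] by (simp add: power2_eq_square mult.commute)
  finally show ?thesis by simp
qed

lemma standing_psi0_step:
  assumes "standing N p psi c C C' f K idx rep coll"
  shows "\<bar>psi0 p psi (l + 1) - psi0 p psi l\<bar> \<le> C\<^sup>2 * C' / c\<^sup>2 * eps N"
  using psi0_lipschitz[where psi = psi and i = l, OF standingD(2,3)[OF assms]
      standing_psi_bounds[OF assms] standing_psi_step[OF assms]]
  by (simp add: field_simps)

section \<open>Quadrature error of collocation\<close>

lemma diff_eq_sum_steps_int:
  fixes g :: "int \<Rightarrow> real"
  assumes "a \<le> b"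
  shows "g b - g a = (\<Sum>l\<in>{a..<b}. g (l + 1) - g l)"
  using sum_window_telescope[of g a "nat (b - a)"] assms by simp

lemma abs_diff_le_sum_steps_int:
  fixes g :: "int \<Rightarrow> real"
  shows "\<bar>g i - g c\<bar> \<le> (\<Sum>l\<in>{min i c..<max i c}. \<bar>g (l + 1) - g l\<bar>)"
proof -
  have "\<bar>g i - g c\<bar> = \<bar>\<Sum>l\<in>{min i c..<max i c}. g (l + 1) - g l\<bar>"
    by (cases "c \<le> i") (simp_all add: diff_eq_sum_steps_int[symmetric] abs_minus_commute max_def min_def)
  also have "\<dots> \<le> (\<Sum>l\<in>{min i c..<max i c}. \<bar>g (l + 1) - g l\<bar>)" by (rule sum_abs)
  finally show ?thesis .
qed

lemma card_between_int: "real (card {min i c..<max i c}) = \<bar>real_of_int (i - c)\<bar>"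
  by (simp add: max_def min_def)

lemma lipschitz_int:
  fixes g :: "int \<Rightarrow> real"
  assumes "\<forall>l. \<bar>g (l + 1) - g l\<bar> \<le> B"
  shows "\<bar>g i - g c\<bar> \<le> B * \<bar>real_of_int (i - c)\<bar>"
proof -
  have "\<bar>g i - g c\<bar> \<le> (\<Sum>l\<in>{min i c..<max i c}. B)"
    using abs_diff_le_sum_steps_int[of g i c] sum_mono[of _ "\<lambda>l. \<bar>g (l + 1) - g l\<bar>" "\<lambda>_. B"] assms
    by (meson order_trans)
  also have "\<dots> = B * \<bar>real_of_int (i - c)\<bar>"
    using card_between_int[of i c] by (simp add: mult.commute)
  finally show ?thesis .
qed

text \<open>Discrete Taylor formula: the second differences bound the first differences' variation,
  and the remainder is a sum of \<open>|i - c|\<close> such variations, each at most \<open>M * |i - c|\<close>.\<close>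
lemma taylor_remainder_int:
  fixes g :: "int \<Rightarrow> real"
  assumes second: "\<forall>l. \<bar>g (l + 2) - 2 * g (l + 1) + g l\<bar> \<le> M"
  shows "\<bar>g i - g c - real_of_int (i - c) * (g (c + 1) - g c)\<bar> \<le> M * (real_of_int (i - c))\<^sup>2"
proof -
  have M: "0 \<le> M" using second by (meson abs_ge_zero order_trans)
  define d where "d l = g (l + 1) - g l" for l
  define h where "h l = g l - real_of_int l * d c" for l
  have "\<bar>d (l + 1) - d l\<bar> \<le> M" for l
    using second[rule_format, of l] by (simp add: d_def algebra_simps)
  then have d_var: "\<bar>d l - d c\<bar> \<le> M * \<bar>real_of_int (l - c)\<bar>" for l
    by (intro lipschitz_int) simp
  have "\<bar>h i - h c\<bar> \<le> (\<Sum>l\<in>{min i c..<max i c}. \<bar>h (l + 1) - h l\<bar>)"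
    by (rule abs_diff_le_sum_steps_int)
  also have "\<dots> \<le> (\<Sum>l\<in>{min i c..<max i c}. M * \<bar>real_of_int (i - c)\<bar>)"
  proof (rule sum_mono)
    fix l assume l: "l \<in> {min i c..<max i c}"
    have "\<bar>h (l + 1) - h l\<bar> = \<bar>d l - d c\<bar>" by (simp add: h_def d_def algebra_simps)
    also have "\<dots> \<le> M * \<bar>real_of_int (l - c)\<bar>" by (rule d_var)
    also have "\<dots> \<le> M * \<bar>real_of_int (i - c)\<bar>"
      using l M by (intro mult_left_mono) (auto simp: max_def min_def split: if_splits)
    finally show "\<bar>h (l + 1) - h l\<bar> \<le> M * \<bar>real_of_int (i - c)\<bar>" .
  qed
  also have "\<dots> = M * (real_of_int (i - c))\<^sup>2"
    using card_between_int[of i c] by (simp add: power2_eq_square abs_mult_self_eq)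
  finally show ?thesis by (simp add: h_def d_def algebra_simps)
qed

lemma sum_int_window_id:
  "(\<Sum>i\<in>{a..<a + int n}. real_of_int i) = real n * real_of_int a + real n * (real n - 1) / 2"
proof (induction n)
  case (Suc n)
  have "{a..<a + int (Suc n)} = insert (a + int n) {a..<a + int n}" by auto
  with Suc show ?case by (simp add: field_simps)
qed simp

lemma element_quadrature_error_eq:
  assumes "idx k \<le> idx (Suc k)"
  shows "(1 / real N) * (\<Sum>i\<in>{idx k..<idx (Suc k)}. g i) - Hk N idx k * g c
       = (1 / real N) * (\<Sum>i\<in>{idx k..<idx (Suc k)}. g i - g c)"
  unfolding Hk_eq_sum[OF assms] by (simp add: sum_subtractf right_diff_distrib)

lemma element_quadrature_lipschitz:
  fixes g :: "int \<Rightarrow> real"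
  assumes N: "1 \<le> N" and steps: "\<forall>l. \<bar>g (l + 1) - g l\<bar> \<le> L * eps N"
    and lt: "idx k < idx (Suc k)" and c: "c \<in> {idx k..<idx (Suc k)}" and Hm: "Hk N idx k \<le> Hm"
  shows "\<bar>(1 / real N) * (\<Sum>i\<in>{idx k..<idx (Suc k)}. g i) - Hk N idx k * g c\<bar> \<le> (L * Hm) * Hk N idx k"
proof -
  have eps: "0 < eps N" using eps_pos[OF N] .
  have L: "0 \<le> L" using steps eps by (meson abs_ge_zero order_trans zero_le_mult_iff not_le)
  have "\<bar>\<Sum>i\<in>{idx k..<idx (Suc k)}. g i - g c\<bar> \<le> (\<Sum>i\<in>{idx k..<idx (Suc k)}. L * Hm)"
  proof (rule order_trans[OF sum_abs sum_mono])
    fix i assume i: "i \<in> {idx k..<idx (Suc k)}"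
    have "\<bar>g i - g c\<bar> \<le> L * eps N * \<bar>real_of_int (i - c)\<bar>" by (rule lipschitz_int[OF steps])
    also have "\<dots> \<le> L * eps N * real_of_int (idx (Suc k) - idx k)"
      using i c L eps by (intro mult_left_mono) auto
    also have "\<dots> \<le> L * Hm" using Hm L by (simp add: Hk_def mult_left_mono mult.assoc)
    finally show "\<bar>g i - g c\<bar> \<le> L * Hm" .
  qed
  also have "\<dots> = (L * Hm) * (\<Sum>i\<in>{idx k..<idx (Suc k)}. 1)" by simp
  finally have "(1 / real N) * \<bar>\<Sum>i\<in>{idx k..<idx (Suc k)}. g i - g c\<bar> \<le> (L * Hm) * Hk N idx k"
    unfolding Hk_eq_sum[OF less_imp_le[OF lt]] using N by (simp add: divide_right_mono)
  then show ?thesis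
    unfolding element_quadrature_error_eq[OF less_imp_le[OF lt]] using N by (simp add: abs_mult)
qed

text \<open>Near the midpoint of a window the first-order term of the Taylor expansion nearly
  averages out: it contributes only the offset of \<open>c\<close> from the midpoint.\<close>
lemma window_deviation_midpoint:
  fixes g :: "int \<Rightarrow> real"
  assumes steps: "\<forall>l. \<bar>g (l + 1) - g l\<bar> \<le> B"
    and second: "\<forall>l. \<bar>g (l + 2) - 2 * g (l + 1) + g l\<bar> \<le> M"
    and c: "c \<in> {a..<a + int n}"
    and mid: "\<bar>real_of_int c - (2 * real_of_int a + real n - 1) / 2\<bar> \<le> Cc"
  shows "\<bar>\<Sum>i\<in>{a..<a + int n}. g i - g c\<bar> \<le> real n * (Cc * B + M * (real n)\<^sup>2)"
proof -
  define dc where "dc = g (c + 1) - g c"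
  define R where "R i = g i - g c - real_of_int (i - c) * dc" for i
  have M: "0 \<le> M" using second by (meson abs_ge_zero order_trans)
  have Cc: "0 \<le> Cc" using mid by (meson abs_ge_zero order_trans)
  have "(\<Sum>i\<in>{a..<a + int n}. g i - g c) = (\<Sum>i\<in>{a..<a + int n}. real_of_int (i - c) * dc + R i)"
    by (simp add: R_def)
  also have "\<dots> = (\<Sum>i\<in>{a..<a + int n}. real_of_int (i - c)) * dc + (\<Sum>i\<in>{a..<a + int n}. R i)"
    by (simp only: sum.distrib sum_distrib_right)
  also have "(\<Sum>i\<in>{a..<a + int n}. real_of_int (i - c)) = real n * ((2 * real_of_int a + real n - 1) / 2 - real_of_int c)"
    by (simp add: sum_subtractf sum_int_window_id field_simps)
  finally have split: "(\<Sum>i\<in>{a..<a + int n}. g i - g c)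
      = real n * ((2 * real_of_int a + real n - 1) / 2 - real_of_int c) * dc + (\<Sum>i\<in>{a..<a + int n}. R i)" .
  have linear: "\<bar>real n * ((2 * real_of_int a + real n - 1) / 2 - real_of_int c) * dc\<bar> \<le> real n * Cc * B"
    using mid steps Cc unfolding dc_def
    by (simp add: abs_mult abs_minus_commute mult_mono mult_left_mono)
  have "\<bar>\<Sum>i\<in>{a..<a + int n}. R i\<bar> \<le> (\<Sum>i\<in>{a..<a + int n}. M * (real n)\<^sup>2)"
  proof (rule order_trans[OF sum_abs sum_mono])
    fix i assume i: "i \<in> {a..<a + int n}"
    have "\<bar>R i\<bar> \<le> M * (real_of_int (i - c))\<^sup>2"
      unfolding R_def dc_def by (rule taylor_remainder_int[OF second])
    also have "\<dots> \<le> M * (real n)\<^sup>2"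
    proof (rule mult_left_mono[OF _ M])
      have "\<bar>real_of_int (i - c)\<bar> \<le> real n" using i c by auto
      then show "(real_of_int (i - c))\<^sup>2 \<le> (real n)\<^sup>2" by (metis abs_ge_zero power2_abs power_mono)
    qed
    finally show "\<bar>R i\<bar> \<le> M * (real n)\<^sup>2" .
  qed
  then have remainder: "\<bar>\<Sum>i\<in>{a..<a + int n}. R i\<bar> \<le> real n * (M * (real n)\<^sup>2)" by simp
  have "\<bar>\<Sum>i\<in>{a..<a + int n}. g i - g c\<bar>
      \<le> \<bar>real n * ((2 * real_of_int a + real n - 1) / 2 - real_of_int c) * dc\<bar> + \<bar>\<Sum>i\<in>{a..<a + int n}. R i\<bar>"
    unfolding split by (rule abs_triangle_ineq)
  also have "\<dots> \<le> real n * Cc * B + real n * (M * (real n)\<^sup>2)"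
    using linear remainder by (rule add_mono)
  finally show ?thesis by (simp add: algebra_simps)
qed

lemma element_quadrature_midpoint:
  fixes g :: "int \<Rightarrow> real"
  assumes N: "1 \<le> N" and steps: "\<forall>l. \<bar>g (l + 1) - g l\<bar> \<le> L * eps N"
    and second: "\<forall>l. \<bar>g (l + 2) - 2 * g (l + 1) + g l\<bar> \<le> C2 * (eps N)\<^sup>2"
    and lt: "idx k < idx (Suc k)" and c: "c \<in> {idx k..<idx (Suc k)}" and Hm: "Hk N idx k \<le> Hm"
    and mid: "\<bar>eps N * real_of_int c - (eps N * real_of_int (idx k) + eps N * real_of_int (idx (Suc k) - 1)) / 2\<bar>
      \<le> eps N * Ccoll"
  shows "\<bar>(1 / real N) * (\<Sum>i\<in>{idx k..<idx (Suc k)}. g i) - Hk N idx k * g c\<bar>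
     \<le> (C2 * Hm\<^sup>2 + L * Ccoll * eps N) * Hk N idx k"
proof -
  have eps: "0 < eps N" using eps_pos[OF N] .
  have C2: "0 \<le> C2" using second eps by (meson abs_ge_zero order_trans zero_le_mult_iff not_le zero_less_power)
  define a where "a = idx k"
  define n where "n = nat (idx (Suc k) - idx k)"
  have b: "idx (Suc k) = a + int n" unfolding a_def n_def using lt by simp
  have Hk: "Hk N idx k = eps N * real n" unfolding Hk_def n_def using lt by simp
  have "eps N * real_of_int c - (eps N * real_of_int (idx k) + eps N * real_of_int (idx (Suc k) - 1)) / 2
      = eps N * (real_of_int c - (2 * real_of_int a + real n - 1) / 2)"
    unfolding b a_def by (simp add: algebra_simps)
  then have "eps N * \<bar>real_of_int c - (2 * real_of_int a + real n - 1) / 2\<bar> \<le> eps N * Ccoll"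
    using mid eps by (simp add: abs_mult)
  then have mid': "\<bar>real_of_int c - (2 * real_of_int a + real n - 1) / 2\<bar> \<le> Ccoll"
    using eps by simp
  have "\<bar>(1 / real N) * (\<Sum>i\<in>{idx k..<idx (Suc k)}. g i) - Hk N idx k * g c\<bar>
      = eps N * \<bar>\<Sum>i\<in>{a..<a + int n}. g i - g c\<bar>"
    unfolding element_quadrature_error_eq[OF less_imp_le[OF lt]]
    unfolding b a_def[symmetric] using N by (simp add: eps_def abs_mult)
  also have "\<dots> \<le> eps N * (real n * (Ccoll * (L * eps N) + C2 * (eps N)\<^sup>2 * (real n)\<^sup>2))"
    using window_deviation_midpoint[OF steps second _ mid'] c eps unfolding b a_def by simp
  also have "\<dots> = (C2 * (Hk N idx k)\<^sup>2 + L * Ccoll * eps N) * Hk N idx k"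
    unfolding Hk by (simp add: power2_eq_square algebra_simps)
  also have "\<dots> \<le> (C2 * Hm\<^sup>2 + L * Ccoll * eps N) * Hk N idx k"
    using Hm C2 eps unfolding Hk
    by (intro mult_right_mono add_right_mono mult_left_mono power_mono) simp_all
  finally show ?thesis .
qed

lemma per_Dd:
  assumes "per n g"
  shows "per n (Dd N g)"
  unfolding per_def
proof
  fix i
  have "g (i + int n + 1) = g (i + 1)"
    using assms[unfolded per_def, rule_format, of "i + 1"] by (simp add: ac_simps)
  then show "Dd N g (i + int n) = Dd N g i"
    using assms by (simp add: Dd_def per_def)
qed

lemma second_diff_le_Linf:
  fixes g :: "int \<Rightarrow> real"
  assumes N: "1 \<le> N" and g: "per N g"
  shows "\<bar>g (l + 2) - 2 * g (l + 1) + g l\<bar> \<le> Linf N (Dd N (Dd N g)) * (eps N)\<^sup>2"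
proof -
  have eps: "0 < eps N" using eps_pos[OF N] .
  have DD: "Dd N (Dd N g) l = (g (l + 2) - 2 * g (l + 1) + g l) / (eps N)\<^sup>2" for l
    unfolding Dd_def using eps by (simp add: field_simps power2_eq_square)
  have "per N (Dd N (Dd N g))" using per_Dd[OF per_Dd[OF g]] .
  moreover have "\<forall>i\<in>{1..int N}. \<bar>Dd N (Dd N g) i\<bar> \<le> Linf N (Dd N (Dd N g))"
    unfolding Linf_def by (auto intro: Max_ge)
  ultimately have "\<bar>Dd N (Dd N g) l\<bar> \<le> Linf N (Dd N (Dd N g))"
    using per_all_from_period[OF _ N, where P = "\<lambda>x. \<bar>x\<bar> \<le> Linf N (Dd N (Dd N g))"] by blast
  then show ?thesis unfolding DD using eps by (simp add: abs_divide pos_divide_le_eq)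
qed

section \<open>The modeling error\<close>

lemma weighted_Cauchy_Schwarz:
  fixes w x y :: "'a \<Rightarrow> real"
  assumes "\<forall>k\<in>I. 0 \<le> w k"
  shows "(\<Sum>k\<in>I. w k * \<bar>x k\<bar> * \<bar>y k\<bar>) \<le> sqrt (\<Sum>k\<in>I. w k * (x k)\<^sup>2) * sqrt (\<Sum>k\<in>I. w k * (y k)\<^sup>2)"
proof -
  define X where "X k = sqrt (w k) * \<bar>x k\<bar>" for k
  define Y where "Y k = sqrt (w k) * \<bar>y k\<bar>" for k
  have "(\<Sum>k\<in>I. w k * \<bar>x k\<bar> * \<bar>y k\<bar>) = (\<Sum>k\<in>I. X k * Y k)"
    by (rule sum.cong[OF refl]) (use assms in \<open>simp add: X_def Y_def algebra_simps real_sqrt_mult[symmetric]\<close>)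
  also have "\<dots> \<le> sqrt ((\<Sum>k\<in>I. X k * Y k)\<^sup>2)" by simp
  also have "\<dots> \<le> sqrt ((\<Sum>k\<in>I. (X k)\<^sup>2) * (\<Sum>k\<in>I. (Y k)\<^sup>2))"
    by (rule real_sqrt_le_mono, rule Cauchy_Schwarz_ineq_sum)
  also have "(\<Sum>k\<in>I. (X k)\<^sup>2) = (\<Sum>k\<in>I. w k * (x k)\<^sup>2)"
    by (rule sum.cong[OF refl]) (use assms in \<open>simp add: X_def power_mult_distrib\<close>)
  also have "(\<Sum>k\<in>I. (Y k)\<^sup>2) = (\<Sum>k\<in>I. w k * (y k)\<^sup>2)"
    by (rule sum.cong[OF refl]) (use assms in \<open>simp add: Y_def power_mult_distrib\<close>)
  finally show ?thesis by (simp add: real_sqrt_mult)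
qed

lemma le_divide_if_mult_square_le:
  fixes c X M :: real
  assumes "0 < c" "0 \<le> X" "0 \<le> M" "c * X\<^sup>2 \<le> M * X"
  shows "X \<le> M / c"
proof (cases "X = 0")
  case True
  then show ?thesis using assms by simp
next
  case False
  then have "c * X \<le> M" using assms by (simp add: power2_eq_square)
  then show ?thesis using assms(1) by (simp add: field_simps)
qed

text \<open>First Strang lemma for diagonal forms: \<open>x\<close> and \<open>y\<close> are the Galerkin solutions for the forms
  \<open>a\<close> and \<open>b\<close> with a common right-hand side of dual norm at most \<open>F\<close>.\<close>
lemma diagonal_Strang_bound:
  fixes w a b x y :: "'a \<Rightarrow> real"
  assumes c: "0 < c" and \<delta>: "0 \<le> \<delta>" and F: "0 \<le> F"
    and w: "\<forall>k\<in>I. 0 \<le> w k"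
    and a: "\<forall>k\<in>I. c * w k \<le> a k" and b: "\<forall>k\<in>I. c * w k \<le> b k"
    and ab: "\<forall>k\<in>I. \<bar>a k - b k\<bar> \<le> \<delta> * w k"
    and orth: "(\<Sum>k\<in>I. a k * x k * (x k - y k)) = (\<Sum>k\<in>I. b k * y k * (x k - y k))"
    and stable: "(\<Sum>k\<in>I. a k * (x k)\<^sup>2) \<le> F * sqrt (\<Sum>k\<in>I. w k * (x k)\<^sup>2)"
  shows "sqrt (\<Sum>k\<in>I. w k * (x k - y k)\<^sup>2) \<le> \<delta> / c\<^sup>2 * F"
proof -
  define P where "P = (\<Sum>k\<in>I. w k * (x k)\<^sup>2)"
  define E where "E = (\<Sum>k\<in>I. w k * (x k - y k)\<^sup>2)"
  have P: "0 \<le> P" and E: "0 \<le> E"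
    unfolding P_def E_def using w by (auto intro!: sum_nonneg)
  have "c * (sqrt P)\<^sup>2 \<le> (\<Sum>k\<in>I. a k * (x k)\<^sup>2)"
    unfolding P_def real_sqrt_pow2[OF P[unfolded P_def]] sum_distrib_left
    by (rule sum_mono) (use a in \<open>simp add: mult.assoc[symmetric] mult_right_mono\<close>)
  also have "\<dots> \<le> F * sqrt P" using stable unfolding P_def .
  finally have sqrt_P: "sqrt P \<le> F / c"
    by (rule le_divide_if_mult_square_le[OF c real_sqrt_ge_zero[OF P] F])
  have "c * (sqrt E)\<^sup>2 \<le> (\<Sum>k\<in>I. b k * (x k - y k)\<^sup>2)"
    unfolding E_def real_sqrt_pow2[OF E[unfolded E_def]] sum_distrib_left
    by (rule sum_mono) (use b in \<open>simp add: mult.assoc[symmetric] mult_right_mono\<close>)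
  also have "\<dots> = (\<Sum>k\<in>I. b k * x k * (x k - y k)) - (\<Sum>k\<in>I. a k * x k * (x k - y k))"
    unfolding orth by (simp add: sum_subtractf[symmetric] power2_eq_square algebra_simps)
  also have "\<dots> = (\<Sum>k\<in>I. (b k - a k) * x k * (x k - y k))"
    by (simp add: sum_subtractf[symmetric] algebra_simps)
  also have "\<dots> \<le> (\<Sum>k\<in>I. \<delta> * (w k * \<bar>x k\<bar> * \<bar>x k - y k\<bar>))"
  proof (rule sum_mono)
    fix k assume k: "k \<in> I"
    have "(b k - a k) * x k * (x k - y k) \<le> \<bar>b k - a k\<bar> * (\<bar>x k\<bar> * \<bar>x k - y k\<bar>)"
      by (simp add: abs_mult[symmetric] mult.assoc)
    also have "\<dots> \<le> \<delta> * w k * (\<bar>x k\<bar> * \<bar>x k - y k\<bar>)"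
      using ab k by (simp add: abs_minus_commute mult_right_mono)
    finally show "(b k - a k) * x k * (x k - y k) \<le> \<delta> * (w k * \<bar>x k\<bar> * \<bar>x k - y k\<bar>)"
      by (simp add: mult.assoc)
  qed
  also have "\<dots> \<le> \<delta> * (sqrt P * sqrt E)"
    unfolding P_def E_def sum_distrib_left[symmetric]
    by (rule mult_left_mono[OF weighted_Cauchy_Schwarz[OF w] \<delta>])
  finally have "sqrt E \<le> \<delta> * sqrt P / c"
    by (intro le_divide_if_mult_square_le[OF c real_sqrt_ge_zero[OF E]])
      (use \<delta> P in \<open>simp_all add: mult_ac\<close>)
  also have "\<dots> \<le> \<delta> * (F / c) / c"
    by (intro divide_right_mono mult_left_mono sqrt_P \<delta>) (use c in simp)
  finally show ?thesis unfolding E_def by (simp add: power2_eq_square)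
qed

lemma HQC_form_elementwise:
  assumes st: "standing N p psi c C C' f K idx rep coll"
    and u: "u \<in> UHper N K idx" and v: "v \<in> UHper N K idx"
  shows "(\<Sum>k=1..K. Hk N idx k * ipRep p (rep k)
            (\<lambda>i. psicoll psi (coll k) i * Dd N (Rk N p psi idx rep coll k u) i)
            (Dd N (Rk N p psi idx rep coll k v)))
       = (\<Sum>k=1..K. Hk N idx k * psi0 p psi (coll k) * Dd N u (idx k) * Dd N v (idx k))"
proof (rule sum.cong[OF refl])
  fix k assume k: "k \<in> {1..K}"
  have "\<forall>i j. 0 < psi i j" "\<forall>i. per p (psi i)"
    using standing_psi_pos[OF st] standing_psi_per[OF st] by blast+
  from ipRep_Rk[OF standingD(1,2)[OF st] this standingD(4)[OF st] k u v]
  show "Hk N idx k * ipRep p (rep k) (\<lambda>i. psicoll psi (coll k) i * Dd N (Rk N p psi idx rep coll k u) i)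
          (Dd N (Rk N p psi idx rep coll k v))
      = Hk N idx k * psi0 p psi (coll k) * Dd N u (idx k) * Dd N v (idx k)"
    by (simp add: mult_ac)
qed

lemma element_integral_psi0_ge:
  assumes st: "standing N p psi c C C' f K idx rep coll" and k: "k \<in> {1..K}"
  shows "c * Hk N idx k \<le> (1 / real N) * (\<Sum>i\<in>{idx k..<idx (Suc k)}. psi0 p psi i)"
proof -
  have "(\<Sum>i\<in>{idx k..<idx (Suc k)}. c) \<le> (\<Sum>i\<in>{idx k..<idx (Suc k)}. psi0 p psi i)"
    using psi0_bounds(1)[OF standingD(2,3)[OF st] standing_psi_bounds[OF st]] by (intro sum_mono)
  then show ?thesis
    using standingD(1)[OF st] less_imp_le[OF mesh_idx_less[OF standingD(4)[OF st] k]]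
    by (simp add: Hk_eq_sum divide_right_mono mult.commute)
qed

text \<open>The HQC form is the homogenized form with the element integral of \<open>\<psi>\<^sup>0\<close> replaced by the
  collocated value \<open>H\<^sub>k * \<psi>\<^sup>0(x\<^sub>k)\<close>, so the modeling error is controlled by this quadrature error.\<close>
lemma modeling_error_H1_bound:
  assumes st: "standing N p psi c C C' f K idx rep coll"
    and hq: "HQC_sol N p psi f K idx rep coll uH" and hm: "hom_sol N p psi f K idx ut"
    and quad: "\<forall>k\<in>{1..K}. \<bar>(1 / real N) * (\<Sum>i\<in>{idx k..<idx (Suc k)}. psi0 p psi i)
              - Hk N idx k * psi0 p psi (coll k)\<bar> \<le> \<delta> * Hk N idx k"
  shows "H1 N (\<lambda>i. uH i - ut i) \<le> \<delta> / c\<^sup>2 * Hm1 N f"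
proof -
  have N: "1 \<le> N" and c: "0 < c" and m: "mesh N K idx" using standingD[OF st] by auto
  have Hk: "0 < Hk N idx k" if "k \<in> {1..K}" for k using Hk_pos[OF N m that] .
  have "1 \<in> {1..K}" using m by (simp add: mesh_def)
  then have \<delta>: "0 \<le> \<delta>"
    using quad Hk[of 1] by (meson abs_ge_zero order_trans zero_le_mult_iff not_le)
  have uH: "uH \<in> UHzero N K idx" and ut: "ut \<in> UHzero N K idx"
    using hq hm by (auto simp: HQC_sol_def hom_sol_def)
  define e where "e = (\<lambda>i. uH i - ut i)"
  have e: "e \<in> UHzero N K idx" unfolding e_def by (rule UHzero_diff[OF uH ut])
  define a where "a k = Hk N idx k * psi0 p psi (coll k)" for k
  define b where "b k = (1 / real N) * (\<Sum>i\<in>{idx k..<idx (Suc k)}. psi0 p psi i)" for k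
  define x where "x k = Dd N uH (idx k)" for k
  define y where "y k = Dd N ut (idx k)" for k
  have hqc: "(\<Sum>k=1..K. a k * x k * Dd N v (idx k)) = ipX N f v" if v: "v \<in> UHzero N K idx" for v
    using hq v HQC_form_elementwise[OF st, of uH v] uH
    by (simp add: HQC_sol_def UHzero_def a_def x_def)
  have hom: "(\<Sum>k=1..K. b k * y k * Dd N v (idx k)) = ipX N f v" if v: "v \<in> UHzero N K idx" for v
    using hm v ipX_UHper_elementwise[OF m, of ut v "psi0 p psi"] ut
    by (simp add: hom_sol_def UHzero_def b_def y_def mult_ac)
  have e_slope: "Dd N e (idx k) = x k - y k" for k
    unfolding e_def x_def y_def by (rule Dd_diff)
  have "sqrt (\<Sum>k=1..K. Hk N idx k * (x k - y k)\<^sup>2) \<le> \<delta> / c\<^sup>2 * Hm1 N f"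
  proof (rule diagonal_Strang_bound[OF c \<delta> Hm1_nonneg[OF N]])
    show "\<forall>k\<in>{1..K}. 0 \<le> Hk N idx k" using Hk by (simp add: less_imp_le)
    show "\<forall>k\<in>{1..K}. c * Hk N idx k \<le> a k"
      using Hk psi0_bounds(1)[OF standingD(2,3)[OF st] standing_psi_bounds[OF st]]
      by (simp add: a_def mult.commute mult_left_mono less_imp_le)
    show "\<forall>k\<in>{1..K}. c * Hk N idx k \<le> b k"
      using element_integral_psi0_ge[OF st] by (simp add: b_def)
    show "\<forall>k\<in>{1..K}. \<bar>a k - b k\<bar> \<le> \<delta> * Hk N idx k"
      using quad by (simp add: a_def b_def abs_minus_commute)
    show "(\<Sum>k=1..K. a k * x k * (x k - y k)) = (\<Sum>k=1..K. b k * y k * (x k - y k))"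
      using hqc[OF e] hom[OF e] by (simp add: e_slope)
    have "(\<Sum>k=1..K. a k * (x k)\<^sup>2) = ipX N f uH"
      using hqc[OF uH] by (simp add: x_def power2_eq_square mult.assoc)
    also have "\<dots> \<le> Hm1 N f * H1 N uH"
      using ipX_le_Hm1_mult_H1[OF N] uH by (simp add: UHzero_def)
    also have "H1 N uH = sqrt (\<Sum>k=1..K. Hk N idx k * (x k)\<^sup>2)"
      using H1_UHper_elementwise[OF m] uH by (simp add: UHzero_def x_def)
    finally show "(\<Sum>k=1..K. a k * (x k)\<^sup>2) \<le> Hm1 N f * sqrt (\<Sum>k=1..K. Hk N idx k * (x k)\<^sup>2)" .
  qed
  moreover have "H1 N e = sqrt (\<Sum>k=1..K. Hk N idx k * (x k - y k)\<^sup>2)"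
    using H1_UHper_elementwise[OF m] e by (simp add: UHzero_def e_slope)
  ultimately show ?thesis unfolding e_def by simp
qed

lemma modeling_error_Uzero:
  assumes "HQC_sol N p psi f K idx rep coll uH" and "hom_sol N p psi f K idx ut"
  shows "(\<lambda>i. uH i - ut i) \<in> Uzero N"
proof -
  have "uH \<in> UHzero N K idx" "ut \<in> UHzero N K idx"
    using assms by (simp_all add: HQC_sol_def hom_sol_def)
  from UHzero_diff[OF this] show ?thesis by (simp add: UHzero_def)
qed

lemma modeling_error_poincare:
  assumes "standing N p psi c C C' f K idx rep coll"
    and "HQC_sol N p psi f K idx rep coll uH" and "hom_sol N p psi f K idx ut"
  shows "L2 N (\<lambda>i. uH i - ut i) \<le> 1 / (2 * sqrt 3) * H1 N (\<lambda>i. uH i - ut i)"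
  by (rule poincare_Uzero[OF standingD(1)[OF assms(1)] modeling_error_Uzero[OF assms(2,3)]])

lemma modeling_error_first_order:
  assumes st: "standing N p psi c C C' f K idx rep coll"
    and hq: "HQC_sol N p psi f K idx rep coll uH" and hm: "hom_sol N p psi f K idx ut"
  shows "H1 N (\<lambda>i. uH i - ut i) \<le> (C\<^sup>2 * C' / c\<^sup>2 / c\<^sup>2) * Hmax N K idx * Hm1 N f"
proof -
  define L where "L = C\<^sup>2 * C' / c\<^sup>2"
  have "H1 N (\<lambda>i. uH i - ut i) \<le> (L * Hmax N K idx) / c\<^sup>2 * Hm1 N f"
  proof (rule modeling_error_H1_bound[OF st hq hm], rule ballI)
    fix k assume k: "k \<in> {1..K}"
    show "\<bar>1 / real N * (\<Sum>i\<in>{idx k..<idx (Suc k)}. psi0 p psi i) - Hk N idx k * psi0 p psi (coll k)\<bar>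
        \<le> L * Hmax N K idx * Hk N idx k"
      using standing_psi0_step[OF st] mesh_idx_less[OF standingD(4)[OF st] k] standing_coll_in_element[OF st k] k
      by (intro element_quadrature_lipschitz[OF standingD(1)[OF st] _ _ _ Hk_le_Hmax[OF k]])
        (simp_all add: L_def)
  qed
  then show ?thesis unfolding L_def by (simp add: field_simps)
qed

lemma modeling_error_second_order:
  assumes st: "standing N p psi c C C' f K idx rep coll"
    and coll: "\<forall>k\<in>{1..K}. \<bar>eps N * real_of_int (coll k)
          - (eps N * real_of_int (idx k) + eps N * real_of_int (idx (Suc k) - 1)) / 2\<bar> \<le> eps N * Ccoll"
    and second: "Linf N (Dd N (Dd N (psi0 p psi))) \<le> C2"
    and hq: "HQC_sol N p psi f K idx rep coll uH" and hm: "hom_sol N p psi f K idx ut"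
  shows "H1 N (\<lambda>i. uH i - ut i)
    \<le> (C2 / c\<^sup>2 * (Hmax N K idx)\<^sup>2 + (C\<^sup>2 * C' / c\<^sup>2 * Ccoll / c\<^sup>2) * eps N) * Hm1 N f"
proof -
  define L where "L = C\<^sup>2 * C' / c\<^sup>2"
  have N: "1 \<le> N" using standingD(1)[OF st] .
  have second_diff: "\<bar>psi0 p psi (l + 2) - 2 * psi0 p psi (l + 1) + psi0 p psi l\<bar> \<le> C2 * (eps N)\<^sup>2" for l
    using second_diff_le_Linf[OF N standing_psi0_per[OF st], of l] second
    by (meson order_trans mult_right_mono zero_le_power2)
  have "H1 N (\<lambda>i. uH i - ut i) \<le> (C2 * (Hmax N K idx)\<^sup>2 + L * Ccoll * eps N) / c\<^sup>2 * Hm1 N f"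
  proof (intro modeling_error_H1_bound[OF st hq hm] ballI)
    fix k assume k: "k \<in> {1..K}"
    show "\<bar>1 / real N * (\<Sum>i\<in>{idx k..<idx (Suc k)}. psi0 p psi i) - Hk N idx k * psi0 p psi (coll k)\<bar>
        \<le> (C2 * (Hmax N K idx)\<^sup>2 + L * Ccoll * eps N) * Hk N idx k"
      using standing_psi0_step[OF st] mesh_idx_less[OF standingD(4)[OF st] k] standing_coll_in_element[OF st k] k coll
      by (intro element_quadrature_midpoint[OF N _ allI[OF second_diff] _ _ Hk_le_Hmax[OF k]])
        (simp_all add: L_def)
  qed
  also have "(C2 * (Hmax N K idx)\<^sup>2 + L * Ccoll * eps N) / c\<^sup>2 * Hm1 N f
      = (C2 / c\<^sup>2 * (Hmax N K idx)\<^sup>2 + (C\<^sup>2 * C' / c\<^sup>2 * Ccoll / c\<^sup>2) * eps N) * Hm1 N f"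
    using standingD(3)[OF st] unfolding L_def by (simp add: field_simps)
  finally show ?thesis .
qed

lemma modeling_error_eq_0_if_x_independent:
  assumes st: "standing N p psi c C C' f K idx rep coll"
    and indep: "\<forall>i i' j. psi i j = psi i' j"
    and hq: "HQC_sol N p psi f K idx rep coll uH" and hm: "hom_sol N p psi f K idx ut"
  shows "(\<lambda>i. uH i - ut i) = (\<lambda>_. 0)"
proof -
  have N: "1 \<le> N" using standingD(1)[OF st] .
  have const: "psi0 p psi i = psi0 p psi i'" for i i'
    unfolding psi0_def avgY_def using indep by metis
  have "H1 N (\<lambda>i. uH i - ut i) \<le> 0 / c\<^sup>2 * Hm1 N f"
  proof (rule modeling_error_H1_bound[OF st hq hm], rule ballI)
    fix k assume k: "k \<in> {1..K}"
    have "(\<Sum>i\<in>{idx k..<idx (Suc k)}. psi0 p psi i - psi0 p psi (coll k)) = 0"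
      by (rule sum.neutral) (use const[of _ "coll k"] in simp)
    then show "\<bar>1 / real N * (\<Sum>i\<in>{idx k..<idx (Suc k)}. psi0 p psi i) - Hk N idx k * psi0 p psi (coll k)\<bar>
        \<le> 0 * Hk N idx k"
      using element_quadrature_error_eq[OF less_imp_le[OF mesh_idx_less[OF standingD(4)[OF st] k]]] by simp
  qed
  then have "H1 N (\<lambda>i. uH i - ut i) = 0" using H1_nonneg[of N "\<lambda>i. uH i - ut i"] by simp
  then show ?thesis by (rule Uzero_eq_0_if_H1_eq_0[OF N modeling_error_Uzero[OF hq hm]])
qed

theorem theorem6p4:
  shows
  "(\<forall>(p::nat) c C C'. \<exists>C10. \<forall>N psi f K idx rep coll uH ut.
      standing N p psi c C C' f K idx rep coll \<and>
      HQC_sol N p psi f K idx rep coll uH \<and> hom_sol N p psi f K idx ut \<longrightarrow>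
        L2 N (\<lambda>i. uH i - ut i) \<le> 1 / (2 * sqrt 3) * H1 N (\<lambda>i. uH i - ut i) \<and>
        H1 N (\<lambda>i. uH i - ut i) \<le> C10 * Hmax N K idx * Hm1 N f)
 \<and> (\<forall>(p::nat) c C C' Ccoll C''. \<exists>C11 C12. \<forall>N psi f K idx rep coll uH ut.
      standing N p psi c C C' f K idx rep coll \<and>
      (\<forall>k\<in>{1..K}. \<bar>eps N * real_of_int (coll k)
          - (eps N * real_of_int (idx k) + eps N * real_of_int (idx (Suc k) - 1)) / 2\<bar>
          \<le> eps N * Ccoll) \<and>
      Linf N (Dd N (Dd N (psi0 p psi))) \<le> C'' \<and>
      HQC_sol N p psi f K idx rep coll uH \<and> hom_sol N p psi f K idx ut \<longrightarrow>
        L2 N (\<lambda>i. uH i - ut i) \<le> 1 / (2 * sqrt 3) * H1 N (\<lambda>i. uH i - ut i) \<and>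
        H1 N (\<lambda>i. uH i - ut i) \<le> (C11 * (Hmax N K idx)\<^sup>2 + C12 * eps N) * Hm1 N f)
 \<and> (\<forall>N (p::nat) psi c C C' f K idx rep coll uH ut.
      standing N p psi c C C' f K idx rep coll \<and>
      (\<forall>i i' j. psi i j = psi i' j) \<and>
      HQC_sol N p psi f K idx rep coll uH \<and> hom_sol N p psi f K idx ut \<longrightarrow>
        (\<lambda>i. uH i - ut i) = (\<lambda>_. 0))"
  apply (intro conjI allI)
    subgoal for p c C C'
      by (rule exI[of _ "C\<^sup>2 * C' / c\<^sup>2 / c\<^sup>2"])
        (blast intro: modeling_error_poincare modeling_error_first_order)
   subgoal for p c C C' Ccoll C''
     by (rule exI[of _ "C'' / c\<^sup>2"], rule exI[of _ "C\<^sup>2 * C' / c\<^sup>2 * Ccoll / c\<^sup>2"])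
       (blast intro: modeling_error_poincare modeling_error_second_order)
  by (blast intro: modeling_error_eq_0_if_x_independent)

end
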